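(* Let $j$ range over $\{1,\dots,N\}$ and suppose, for each $j$, that $m_j\in\{1,\dots,\dim(V_j)-1\}$ satisfies $0<\lambda^j_{m_j+1}<\infty$. Let $V_0$ be the GenEO coarse space built from these $m_j$ and $\Theta=(\min_{1\le j\le N}\lambda^j_{m_j+1})^{-1}$. Then for every $v\in V^h$, $$\inf_{z\in V_0}\|v-z\|_a^2\le k_0^2\,\Theta\,\|v\|_a^2.$$
   Context: Let $\Omega\subset\mathbb{R}^d$ be a bounded polygonal/Lipschitz polyhedral domain, $A:\Omega\to\mathbb{R}^{d\times d}$ symmetric with $|\xi|^2\le A(x)\xi\cdot\xi\le a_{\max}|\xi|^2$, and $c^+\in L^\infty(\Omega)$, $c^+\ge0$. Let $a(u,v)=\int_\Omega(A\nabla u\cdot\nabla v+c^+uv)$ on $H^1_0(\Omega)$, $\|u\|_a=a(u,u)^{1/2}$. Let $\mathcal{T}_h$ be a shape-regular triangulation and $V^h\subset H^1_0(\Omega)$ a conforming nodal finite element space. Non-overlapping subdomains $\Omega'_i$ ($i=1,\dots,N$), resolved by $\mathcal{T}_h$, are extended by layers of elements to overlapping $\Omega_i$. Let $\widetilde V_j=\{v|_{\Omega_j}:v\in V^h\}$ with nodal basis $\{\phi^j_k\}$, $V_j=\{v\in\widetilde V_j:v=0\text{ on }\partial\Omega_j\}$, $a_{\Omega_j}(u,v)=\int_{\Omega_j}(A\nabla u\cdot\nabla v+c^+uv)$, $R_j^\top:V_j\to V^h$ extension by zero, and $k_0=\max_{\tau\in\mathcal{T}_h}\#\{j:\tau\subset\Omega_j\}$.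 For a node $k$ let $\mu_k$ be the number of subdomains for which $k$ is an interior degree of freedom; $\Xi_j:\widetilde V_j\to V_j$, $\Xi_j(\sum_k v_k\phi^j_k)=\sum_{k\text{ interior to }\Omega_j}\mu_k^{-1}v_k\phi^j_k$. The generalised eigenproblem on $\Omega_j$: find $p\in\widetilde V_j\setminus\{0\}$, $\lambda$, with $a_{\Omega_j}(p,v)=\lambda\,a_{\Omega_j}(\Xi_j p,\Xi_j v)$ for all $v\in\widetilde V_j$; eigenvalues ordered $\lambda^j_1\le\lambda^j_2\le\cdots$ with eigenfunctions $p^j_l$. The GenEO coarse space is $V_0=\mathrm{span}\{R_j^\top\Xi_j(p^j_l):1\le l\le m_j,\ 1\le j\le N\}$. *)

theory Defs
  imports "HOL-Analysis.Analysis" "HOL-Library.Function_Algebras"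
begin

definition fscale :: "real \<Rightarrow> ('a \<Rightarrow> real) \<Rightarrow> ('a \<Rightarrow> real)" where
  "fscale r f = (\<lambda>x. r * f x)"

abbreviation fspan :: "('a \<Rightarrow> real) set \<Rightarrow> ('a \<Rightarrow> real) set" where
  "fspan \<equiv> module.span fscale"

abbreviation fdim :: "('a \<Rightarrow> real) set \<Rightarrow> nat" where
  "fdim \<equiv> vector_space.dim fscale"

definition mesh_of :: "'a::euclidean_space set set \<Rightarrow> 'a set \<Rightarrow> bool" where
  "mesh_of T \<Omega> \<longleftrightarrow> triangulation T \<and> (\<forall>\<tau>\<in>T. int DIM('a) simplex \<tau>)
     \<and> \<Omega> = interior (\<Union>T) \<and> closure \<Omega> = \<Union>T"

definition polyhedral_domain :: "'a::euclidean_space set \<Rightarrow> 'a set set \<Rightarrow> bool" where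
  "polyhedral_domain \<Omega> T \<longleftrightarrow> open \<Omega> \<and> connected \<Omega> \<and> bounded \<Omega> \<and> \<Omega> \<noteq> {} \<and> mesh_of T \<Omega>"

text \<open>Conforming nodal finite element space \<open>Vh \<subseteq> H^1_0(\<Omega>)\<close> on the mesh \<open>T\<close>:
  continuous, piecewise polynomial functions vanishing outside \<open>\<Omega>\<close>, with a nodal
  basis \<open>\<phi> k\<close> indexed by the (interior) nodes \<open>k \<in> X\<close>; the basis function of a node
  vanishes on every element not containing the node.\<close>
definition nodal_fe_space ::
  "'a::euclidean_space set set \<Rightarrow> 'a set \<Rightarrow> 'a set \<Rightarrow> ('a \<Rightarrow> 'a \<Rightarrow> real) \<Rightarrow> ('a \<Rightarrow> real) set \<Rightarrow> bool" where
  "nodal_fe_space T \<Omega> X \<phi> Vh \<longleftrightarrow>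
     finite X \<and> X \<subseteq> \<Omega> \<and> Vh = fspan (\<phi> ` X)
     \<and> (\<forall>k\<in>X. \<forall>l\<in>X. \<phi> k l = (if k = l then 1 else 0))
     \<and> (\<forall>k\<in>X. \<forall>\<tau>\<in>T. k \<notin> \<tau> \<longrightarrow> (\<forall>x\<in>\<tau>. \<phi> k x = 0))
     \<and> (\<forall>v\<in>Vh. continuous_on UNIV v \<and> (\<forall>x. x \<notin> \<Omega> \<longrightarrow> v x = 0)
           \<and> (\<forall>\<tau>\<in>T. \<exists>q. polynomial_function q \<and> (\<forall>x\<in>\<tau>. v x = q x)))"

definition grad :: "('a::euclidean_space \<Rightarrow> real) \<Rightarrow> 'a \<Rightarrow> 'a" where
  "grad u x = (SOME g. GDERIV u x :> g)"

definition aform :: "('a::euclidean_space \<Rightarrow> 'a \<Rightarrow> 'a) \<Rightarrow> ('a \<Rightarrow> real) \<Rightarrow> 'a set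
    \<Rightarrow> ('a \<Rightarrow> real) \<Rightarrow> ('a \<Rightarrow> real) \<Rightarrow> real" where
  "aform A c S u v = (LINT x|lebesgue_on S. A x (grad u x) \<bullet> grad v x + c x * u x * v x)"

definition anorm :: "('a::euclidean_space \<Rightarrow> 'a \<Rightarrow> 'a) \<Rightarrow> ('a \<Rightarrow> real) \<Rightarrow> 'a set
    \<Rightarrow> ('a \<Rightarrow> real) \<Rightarrow> real" where
  "anorm A c \<Omega> u = sqrt (aform A c \<Omega> u u)"

definition add_layer :: "'a set set \<Rightarrow> 'a set set \<Rightarrow> 'a set set" where
  "add_layer T S = S \<union> {\<tau>\<in>T. \<exists>\<sigma>\<in>S. \<tau> \<inter> \<sigma> \<noteq> {}}"

text \<open>Restriction of a function to a set (extended by zero outside);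
  also used as extension by zero \<open>R_j^T\<close>.\<close>
definition restr :: "'a set \<Rightarrow> ('a \<Rightarrow> real) \<Rightarrow> ('a \<Rightarrow> real)" where
  "restr S v = (\<lambda>x. if x \<in> S then v x else 0)"

definition Vtilde :: "('a \<Rightarrow> real) set \<Rightarrow> 'a::topological_space set \<Rightarrow> ('a \<Rightarrow> real) set" where
  "Vtilde Vh Oj = restr (closure Oj) ` Vh"

definition Vloc :: "('a \<Rightarrow> real) set \<Rightarrow> 'a::topological_space set \<Rightarrow> ('a \<Rightarrow> real) set" where
  "Vloc Vh Oj = {w \<in> Vtilde Vh Oj. \<forall>x\<in>frontier Oj. w x = 0}"

definition RT :: "'a::topological_space set \<Rightarrow> ('a \<Rightarrow> real) \<Rightarrow> ('a \<Rightarrow> real)" where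
  "RT Oj w = restr (closure Oj) w"

definition mu :: "nat \<Rightarrow> (nat \<Rightarrow> 'a set) \<Rightarrow> 'a \<Rightarrow> nat" where
  "mu N Om k = card {j\<in>{1..N}. k \<in> Om j}"

text \<open>Partition of unity operator \<open>\<Xi>_j\<close>: nodal coefficients of \<open>w \<in> \<tilde>V_j\<close> are its
  nodal values; keep the interior nodes of \<open>\<Omega>_j\<close>, weighted by \<open>1/\<mu>_k\<close>.\<close>
definition Xi :: "nat \<Rightarrow> (nat \<Rightarrow> 'a::topological_space set) \<Rightarrow> 'a set \<Rightarrow> ('a \<Rightarrow> 'a \<Rightarrow> real)
    \<Rightarrow> nat \<Rightarrow> ('a \<Rightarrow> real) \<Rightarrow> ('a \<Rightarrow> real)" where
  "Xi N Om X \<phi> j w = (\<lambda>x. \<Sum>k\<in>{k\<in>X. k \<in> Om j}.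
       (w k / real (mu N Om k)) * restr (closure (Om j)) (\<phi> k) x)"

definition k0 :: "'a::topological_space set set \<Rightarrow> nat \<Rightarrow> (nat \<Rightarrow> 'a set) \<Rightarrow> nat" where
  "k0 T N Om = Max ((\<lambda>\<tau>. card {j\<in>{1..N}. \<tau> \<subseteq> closure (Om j)}) ` T)"

text \<open>\<open>(\<lambda>,p)\<close> is an eigenpair of \<open>a_{\<Omega>_j}(p,v) = \<lambda> a_{\<Omega>_j}(\<Xi>_j p, \<Xi>_j v)\<close> on \<open>W = \<tilde>V_j\<close>;
  the eigenvalue \<open>+\<infinity>\<close> means \<open>a_{\<Omega>_j}(\<Xi>_j p, \<Xi>_j v) = 0\<close> for all \<open>v\<close>.\<close>
definition geneo_eigenpair :: "(('a \<Rightarrow> real) \<Rightarrow> ('a \<Rightarrow> real) \<Rightarrow> real) \<Rightarrow> (('a \<Rightarrow> real) \<Rightarrow> ('a \<Rightarrow> real))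
    \<Rightarrow> ('a \<Rightarrow> real) set \<Rightarrow> ereal \<Rightarrow> ('a \<Rightarrow> real) \<Rightarrow> bool" where
  "geneo_eigenpair aj Xj W lam p \<longleftrightarrow> p \<in> W \<and> p \<noteq> 0 \<and>
     (case lam of
        ereal r \<Rightarrow> (\<forall>v\<in>W. aj p v = r * aj (Xj p) (Xj v))
      | PInfty \<Rightarrow> (\<forall>v\<in>W. aj (Xj p) (Xj v) = 0)
      | MInfty \<Rightarrow> False)"

text \<open>\<open>p 1, ..., p n\<close> (\<open>n = dim W\<close>) is a basis of \<open>W\<close> of eigenfunctions, with
  eigenvalues \<open>lam 1 \<le> lam 2 \<le> ... \<le> lam n\<close> (counted with multiplicity).\<close>
definition geneo_eigensystem :: "(('a \<Rightarrow> real) \<Rightarrow> ('a \<Rightarrow> real) \<Rightarrow> real) \<Rightarrow> (('a \<Rightarrow> real) \<Rightarrow> ('a \<Rightarrow> real))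
    \<Rightarrow> ('a \<Rightarrow> real) set \<Rightarrow> (nat \<Rightarrow> ereal) \<Rightarrow> (nat \<Rightarrow> ('a \<Rightarrow> real)) \<Rightarrow> bool" where
  "geneo_eigensystem aj Xj W lam p \<longleftrightarrow>
     (let n = fdim W in
        (\<forall>l\<in>{1..n}. geneo_eigenpair aj Xj W (lam l) (p l))
      \<and> card (p ` {1..n}) = n \<and> fspan (p ` {1..n}) = W
      \<and> (\<forall>l l'. 1 \<le> l \<and> l \<le> l' \<and> l' \<le> n \<longrightarrow> lam l \<le> lam l'))"

end

theory Submission
  imports Defs
begin

text \<open>Write \<open>v = \<Sum>\<^sub>j \<Xi>\<^sub>j(v|\<^bsub>\<Omega>\<^sub>j\<^esub>)\<close> (partition of unity) and expand each \<open>v|\<^bsub>\<Omega>\<^sub>j\<^esub>\<close> in the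
  local eigenbasis \<open>p\<^sup>j\<^sub>l\<close>. The low modes \<open>l \<le> m\<^sub>j\<close> contribute \<open>z\<^sub>j \<in> V\<^sub>0\<close>; the remainder
  \<open>e\<^sub>j = \<Xi>\<^sub>j(high modes)\<close> satisfies \<open>\<lambda>\<^sup>j\<^bsub>m\<^sub>j+1\<^esub> a\<^bsub>\<Omega>\<^sub>j\<^esub>(e\<^sub>j,e\<^sub>j) \<le> a\<^bsub>\<Omega>\<^sub>j\<^esub>(v,v)\<close>, because eigenfunctions
  of distinct eigenvalues are orthogonal for both forms. Then \<open>v - \<Sum>\<^sub>j z\<^sub>j = \<Sum>\<^sub>j e\<^sub>j\<close>, and
  since almost every point lies in at most \<open>k\<^sub>0\<close> subdomains, pointwise Cauchy-Schwarz gives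
  \<open>a(\<Sum>\<^sub>j e\<^sub>j,\<Sum>\<^sub>j e\<^sub>j) \<le> k\<^sub>0 \<Sum>\<^sub>j a\<^bsub>\<Omega>\<^sub>j\<^esub>(e\<^sub>j,e\<^sub>j) \<le> k\<^sub>0 \<Theta> \<Sum>\<^sub>j a\<^bsub>\<Omega>\<^sub>j\<^esub>(v,v) \<le> k\<^sub>0\<^sup>2 \<Theta> a(v,v)\<close>.\<close>

lemma fscale_apply [simp]: "fscale r f x = r * f x"
  by (simp add: fscale_def)

interpretation fun_module: module fscale
  by unfold_locales (auto simp: fscale_def fun_eq_iff algebra_simps)

lemma sum_fun_apply: "(\<Sum>i\<in>I. f i) x = (\<Sum>i\<in>I. (f i x :: real))"
  by (induction I rule: infinite_finite_induct) auto

lemma sum_fscale_eq: "(\<Sum>l\<in>I. fscale (r l) (f l)) = (\<lambda>x. \<Sum>l\<in>I. r l * f l x)"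
  by (rule ext) (simp add: sum_fun_apply)

lemma fspan_expansion:
  assumes "finite I" "inj_on f I" "w \<in> fspan (f ` I)"
  obtains r where "w = (\<lambda>x. \<Sum>l\<in>I. r l * f l x)"
proof -
  obtain u where "w = (\<Sum>g\<in>f ` I. fscale (u g) g)"
    using assms(1,3) fun_module.span_finite[of "f ` I"] by auto
  then have "w = (\<lambda>x. \<Sum>l\<in>I. u (f l) * f l x)"
    by (simp add: sum.reindex[OF assms(2)] sum_fscale_eq)
  then show ?thesis by (rule that)
qed

lemma sum_in_fspan:
  assumes "\<And>l. l \<in> I \<Longrightarrow> r l \<noteq> 0 \<Longrightarrow> f l \<in> B"
  shows "(\<lambda>x. \<Sum>l\<in>I. r l * f l x) \<in> fspan B"
  unfolding sum_fscale_eq[symmetric]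
proof (rule fun_module.span_sum)
  fix l assume "l \<in> I"
  show "fscale (r l) (f l) \<in> fspan B"
  proof (cases "r l = 0")
    case True
    then show ?thesis by (simp add: fun_module.span_zero)
  next
    case False
    then show ?thesis
      using assms \<open>l \<in> I\<close> by (intro fun_module.span_scale fun_module.span_base)
  qed
qed

lemma geneo_eigensystemD:
  assumes "geneo_eigensystem aj Xj W lam p"
  shows "\<And>l. l \<in> {1..fdim W} \<Longrightarrow> geneo_eigenpair aj Xj W (lam l) (p l)"
    and "inj_on p {1..fdim W}" and "fspan (p ` {1..fdim W}) = W"
    and "\<And>l l'. 1 \<le> l \<Longrightarrow> l \<le> l' \<Longrightarrow> l' \<le> fdim W \<Longrightarrow> lam l \<le> lam l'"
  using assms eq_card_imp_inj_on[of "{1..fdim W}" p] unfolding geneo_eigensystem_def Let_def by auto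

lemma sum_indicator_mult:
  assumes "finite I"
  shows "(\<Sum>j\<in>I. indicator (S j) x * f j) = (\<Sum>j\<in>{j\<in>I. x \<in> S j}. f j :: real)"
proof -
  have "(\<Sum>j\<in>I. indicator (S j) x * f j) = (\<Sum>j\<in>I. if x \<in> S j then f j else 0)"
    by (intro sum.cong) (auto simp: indicator_def)
  also have "\<dots> = (\<Sum>j\<in>{j\<in>I. x \<in> S j}. f j)"
    by (rule sum.inter_filter[symmetric, OF assms])
  finally show ?thesis .
qed

definition qform :: "'i set \<Rightarrow> ('i \<Rightarrow> 'i \<Rightarrow> real) \<Rightarrow> ('i \<Rightarrow> real) \<Rightarrow> real" where
  "qform I M e = (\<Sum>l\<in>I. \<Sum>l'\<in>I. e l * e l' * M l l')"

lemma double_sum_le_card_diag: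
  fixes B :: "'i \<Rightarrow> 'i \<Rightarrow> real"
  assumes "finite J" "\<And>j k. j \<in> J \<Longrightarrow> k \<in> J \<Longrightarrow> 2 * B j k \<le> B j j + B k k"
  shows "(\<Sum>j\<in>J. \<Sum>k\<in>J. B j k) \<le> real (card J) * (\<Sum>j\<in>J. B j j)"
proof -
  have "(\<Sum>j\<in>J. \<Sum>k\<in>J. B j k) \<le> (\<Sum>j\<in>J. \<Sum>k\<in>J. (B j j + B k k) / 2)"
    using assms(2) by (intro sum_mono) (simp add: field_simps)
  also have "\<dots> = real (card J) * (\<Sum>j\<in>J. B j j)"
    by (simp add: sum.distrib add_divide_distrib sum_divide_distrib[symmetric] sum_distrib_left)
  finally show ?thesis .
qed

text \<open>The index set splits into low modes (\<open>\<lambda>\<^sub>l < t\<close>), finite high modes and infinite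
  modes; \<open>a\<close> has no cross terms between the three groups, and on the finite high modes
  \<open>a - t b\<close> is the form \<open>b\<close> applied to the coefficients \<open>c\<^sub>l (\<lambda>\<^sub>l - t)\<^sup>1\<^sup>/\<^sup>2\<close>, since
  \<open>b\<close>-cross terms of distinct eigenvalues vanish.\<close>
lemma qform_high_modes_le:
  fixes a b :: "'i \<Rightarrow> 'i \<Rightarrow> real" and lam :: "'i \<Rightarrow> ereal"
  assumes fin: "finite I"
    and sym: "\<And>l l'. l \<in> I \<Longrightarrow> l' \<in> I \<Longrightarrow> a l l' = a l' l \<and> b l l' = b l' l"
    and psd_a: "\<And>e. 0 \<le> qform I a e" and psd_b: "\<And>e. 0 \<le> qform I b e"
    and eig_fin: "\<And>l l' r. l \<in> I \<Longrightarrow> l' \<in> I \<Longrightarrow> lam l = ereal r \<Longrightarrow> a l l' = r * b l l'"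
    and eig_inf: "\<And>l l'. l \<in> I \<Longrightarrow> l' \<in> I \<Longrightarrow> lam l = \<infinity> \<Longrightarrow> b l l' = 0"
    and not_minf: "\<And>l. l \<in> I \<Longrightarrow> lam l \<noteq> -\<infinity>"
  shows "t * qform I b (\<lambda>l. if ereal t \<le> lam l then c l else 0) \<le> qform I a c"
proof -
  define cl where "cl l = (if lam l < ereal t then 1 else if lam l = \<infinity> then 3 else (2::nat))" for l
  define cL where "cL l = (if cl l = 1 then c l else 0)" for l
  define cF where "cF l = (if cl l = 2 then c l else 0)" for l
  define cI where "cI l = (if cl l = 3 then c l else 0)" for l
  define r where "r l = real_of_ereal (lam l)" for l
  define d where "d l = sqrt (r l - t)" for l
  have cl_cases: "cl l = 1 \<or> cl l = 2 \<or> cl l = 3" for l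
    unfolding cl_def by auto
  have lam_r: "lam l = ereal (r l)" if "l \<in> I" "cl l \<noteq> 3" for l
    using that not_minf unfolding cl_def r_def by (cases "lam l") auto
  have r_low: "r l < t" if "l \<in> I" "cl l = 1" for l
    using that lam_r[OF that(1)] unfolding cl_def by (auto split: if_splits)
  have r_high: "t \<le> r l" if "l \<in> I" "cl l = 2" for l
    using that lam_r[OF that(1)] unfolding cl_def by (auto split: if_splits)
  have a_eig: "a l l' = r l * b l l'" if "l \<in> I" "l' \<in> I" "cl l \<noteq> 3" for l l'
    using eig_fin[OF that(1,2) lam_r[OF that(1,3)]] .
  have lam_inf: "lam l = \<infinity>" if "cl l = 3" for l
    using that unfolding cl_def by (auto split: if_splits)
  have b_inf: "b l l' = 0" if "l \<in> I" "l' \<in> I" "cl l = 3 \<or> cl l' = 3" for l l'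
    using that eig_inf sym lam_inf by metis
  have distinct_eig: "b l l' = 0" if "l \<in> I" "l' \<in> I" "cl l \<noteq> 3" "cl l' \<noteq> 3" "r l \<noteq> r l'" for l l'
    using a_eig[OF that(1,2,3)] a_eig[OF that(2,1,4)] sym[OF that(1,2)] that(5)
    by (metis mult_right_cancel)
  have split_pointwise: "c l * c l' * a l l' = cL l * cL l' * a l l' + cI l * cI l' * a l l'
      + (t * (cF l * cF l' * b l l') + (cF l * d l) * (cF l' * d l') * b l l')"
    if l: "l \<in> I" "l' \<in> I" for l l'
  proof -
    have cross_inf: "a l l' = 0" if "cl l \<noteq> cl l'" "cl l = 3 \<or> cl l' = 3"
      using a_eig[OF l] a_eig[OF l(2,1)] b_inf[OF l] b_inf[OF l(2,1)] sym[OF l] that by auto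
    have cross_low: "a l l' = 0" if "cl l = 1 \<and> cl l' = 2 \<or> cl l = 2 \<and> cl l' = 1"
      using that a_eig[OF l] distinct_eig[OF l] r_low[OF l(1)] r_low[OF l(2)]
        r_high[OF l(1)] r_high[OF l(2)] by force
    have high: "a l l' = t * b l l' + d l * d l' * b l l'" if "cl l = 2" "cl l' = 2"
    proof (cases "r l = r l'")
      case True
      then have "d l * d l' = r l - t"
        unfolding d_def using r_high[OF l(1) that(1)] by (simp add: real_sqrt_mult[symmetric])
      then have "a l l' = (t + d l * d l') * b l l'" using a_eig[OF l] that by simp
      then show ?thesis by (simp add: distrib_right)
    qed (use a_eig[OF l] distinct_eig[OF l] that in simp)
    show ?thesis
      using cl_cases[of l] cl_cases[of l'] cross_inf cross_low high
      unfolding cL_def cF_def cI_def by (auto simp: algebra_simps)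
  qed
  have "qform I b (\<lambda>l. if ereal t \<le> lam l then c l else 0) = qform I b cF + qform I b cI"
    unfolding qform_def using cl_cases b_inf
    by (auto intro!: sum.cong simp: sum.distrib[symmetric] cF_def cI_def cl_def not_less)
  also have "qform I b cI = 0"
    unfolding qform_def using b_inf by (auto intro!: sum.neutral simp: cI_def)
  finally have b_high: "qform I b (\<lambda>l. if ereal t \<le> lam l then c l else 0) = qform I b cF"
    by simp
  have "qform I a c = qform I a cL + qform I a cI + (t * qform I b cF + qform I b (\<lambda>l. cF l * d l))"
    unfolding qform_def using split_pointwise by (simp add: sum.distrib sum_distrib_left)
  then show ?thesis
    using b_high psd_a[of cL] psd_a[of cI] psd_b[of "\<lambda>l. cF l * d l"] by simp
qed

lemma gderiv_unique: "GDERIV u x :> g \<Longrightarrow> GDERIV u x :> g' \<Longrightarrow> g = g'"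
proof -
  assume "GDERIV u x :> g" "GDERIV u x :> g'"
  then have "(\<lambda>h. h \<bullet> g) = (\<lambda>h. h \<bullet> g')"
    unfolding gderiv_def by (rule has_derivative_unique)
  then have "(g - g') \<bullet> g = (g - g') \<bullet> g'" by metis
  then have "(g - g') \<bullet> (g - g') = 0" by (simp add: inner_diff_right)
  then show "g = g'" by simp
qed

lemma grad_eqI: "GDERIV u x :> g \<Longrightarrow> grad u x = g"
  unfolding grad_def by (metis someI gderiv_unique)

lemma GDERIV_cong_open:
  assumes "open U" "x \<in> U" "\<And>y. y \<in> U \<Longrightarrow> u y = v y" "GDERIV v x :> g"
  shows "GDERIV u x :> g"
  using assms unfolding gderiv_def by (metis has_derivative_transform_within_open)

lemma grad_cong_open:
  assumes "open U" "x \<in> U" "\<And>y. y \<in> U \<Longrightarrow> u y = v y"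
  shows "grad u x = grad v x"
proof -
  have "GDERIV u x :> g \<longleftrightarrow> GDERIV v x :> g" for g
    using GDERIV_cong_open[OF assms(1,2), of u v g] GDERIV_cong_open[OF assms(1,2), of v u g] assms(3)
    by auto
  then have "gderiv u x = gderiv v x" by (intro ext)
  then show ?thesis unfolding grad_def by simp
qed

lemma grad_zero_open: "open U \<Longrightarrow> x \<in> U \<Longrightarrow> (\<And>y. y \<in> U \<Longrightarrow> u y = 0) \<Longrightarrow> grad u x = 0"
  using grad_cong_open[of U x u "\<lambda>_. 0"] grad_eqI[OF GDERIV_const] by simp

lemma GDERIV_sum:
  "finite I \<Longrightarrow> (\<And>i. i \<in> I \<Longrightarrow> GDERIV (f i) x :> D i) \<Longrightarrow> GDERIV (\<lambda>y. \<Sum>i\<in>I. f i y) x :> (\<Sum>i\<in>I. D i)"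
  by (induction I rule: finite_induct) (auto intro: GDERIV_add GDERIV_const)

lemma GDERIV_cmult: "GDERIV u x :> g \<Longrightarrow> GDERIV (\<lambda>y. r * u y) x :> r *\<^sub>R g"
  using GDERIV_mult[OF GDERIV_const, of u x g r] by simp

lemma GDERIV_bounded_linear:
  fixes f :: "'b::euclidean_space \<Rightarrow> real"
  assumes "bounded_linear f"
  shows "GDERIV f x :> (\<Sum>i\<in>Basis. f i *\<^sub>R i)"
proof -
  interpret bounded_linear f by fact
  have "(\<lambda>h. h \<bullet> (\<Sum>i\<in>Basis. f i *\<^sub>R i)) = f"
  proof
    fix h
    have "f h = f (\<Sum>i\<in>Basis. (h \<bullet> i) *\<^sub>R i)" by (simp add: euclidean_representation)
    also have "\<dots> = (\<Sum>i\<in>Basis. (h \<bullet> i) * f i)" by (simp add: sum scale)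
    also have "\<dots> = h \<bullet> (\<Sum>i\<in>Basis. f i *\<^sub>R i)" by (simp add: inner_sum_right mult.commute)
    finally show "h \<bullet> (\<Sum>i\<in>Basis. f i *\<^sub>R i) = f h" ..
  qed
  then show ?thesis
    unfolding gderiv_def by (simp add: bounded_linear_imp_has_derivative[OF assms])
qed

lemma polynomial_function_continuous_gradient:
  fixes q :: "'b::euclidean_space \<Rightarrow> real"
  assumes "real_polynomial_function q"
  shows "\<exists>D. continuous_on UNIV D \<and> (\<forall>x. GDERIV q x :> D x)"
  using assms
proof induction
  case (linear f)
  show ?case
    using GDERIV_bounded_linear[OF linear] by (intro exI[of _ "\<lambda>_. \<Sum>i\<in>Basis. f i *\<^sub>R i"]) auto
next
  case (const c)
  show ?case using GDERIV_const by (intro exI[of _ "\<lambda>_. 0"]) auto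
next
  case (add f g)
  then obtain D1 D2 where "continuous_on UNIV D1" "\<forall>x. GDERIV f x :> D1 x"
    "continuous_on UNIV D2" "\<forall>x. GDERIV g x :> D2 x" by blast
  then show ?case
    by (intro exI[of _ "\<lambda>x. D1 x + D2 x"]) (auto intro: GDERIV_add continuous_intros)
next
  case (mult f g)
  then obtain D1 D2 where "continuous_on UNIV D1" "\<forall>x. GDERIV f x :> D1 x"
    "continuous_on UNIV D2" "\<forall>x. GDERIV g x :> D2 x" by blast
  moreover have "continuous_on UNIV f" "continuous_on UNIV g"
    using mult continuous_on_polymonial_function real_polynomial_function_eq by blast+
  ultimately show ?case
    by (intro exI[of _ "\<lambda>x. f x *\<^sub>R D2 x + g x *\<^sub>R D1 x"]) (auto intro: GDERIV_mult continuous_intros)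
qed

section \<open>Geometry of the overlapping subdomains\<close>

lemma add_layer_subset: "S \<subseteq> T \<Longrightarrow> add_layer T S \<subseteq> T"
  unfolding add_layer_def by auto

lemma add_layer_mono: "S \<subseteq> S' \<Longrightarrow> add_layer T S \<subseteq> add_layer T S'"
  unfolding add_layer_def by auto

lemma add_layer_funpow_subset: "S \<subseteq> T \<Longrightarrow> (add_layer T ^^ L) S \<subseteq> T"
  by (induction L) (auto dest: add_layer_subset)

lemma add_layer_funpow_increasing: "S \<subseteq> (add_layer T ^^ L) S"
  by (induction L) (auto simp: add_layer_def)

lemma add_layer_subset_funpow: "1 \<le> L \<Longrightarrow> add_layer T S \<subseteq> (add_layer T ^^ L) S"
  using add_layer_mono[OF add_layer_funpow_increasing[where S=S and T=T and L="L - 1"]]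
  by (cases L) auto

locale geneo_setting =
  fixes \<Omega> :: "'a::euclidean_space set"
    and T :: "'a set set"
    and A :: "'a \<Rightarrow> 'a \<Rightarrow> 'a" and amax :: real
    and c :: "'a \<Rightarrow> real"
    and X :: "'a set" and \<phi> :: "'a \<Rightarrow> 'a \<Rightarrow> real" and Vh :: "('a \<Rightarrow> real) set"
    and N :: nat and T' :: "nat \<Rightarrow> 'a set set" and Om :: "nat \<Rightarrow> 'a set"
  assumes dom: "polyhedral_domain \<Omega> T"
    and A_lin: "\<forall>x\<in>\<Omega>. linear (A x)"
    and A_sym: "\<forall>x\<in>\<Omega>. \<forall>u w. A x u \<bullet> w = u \<bullet> A x w"
    and A_ell: "\<forall>x\<in>\<Omega>. \<forall>\<xi>. (norm \<xi>)\<^sup>2 \<le> A x \<xi> \<bullet> \<xi> \<and> A x \<xi> \<bullet> \<xi> \<le> amax * (norm \<xi>)\<^sup>2"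
    and A_meas: "\<forall>u w. (\<lambda>x. A x u \<bullet> w) \<in> borel_measurable lebesgue"
    and c_meas: "c \<in> borel_measurable lebesgue"
    and c_nonneg: "\<forall>x\<in>\<Omega>. 0 \<le> c x"
    and c_bdd: "\<exists>M. AE x in lebesgue_on \<Omega>. c x \<le> M"
    and fe: "nodal_fe_space T \<Omega> X \<phi> Vh"
    and part: "\<forall>i\<in>{1..N}. T' i \<subseteq> T \<and> T' i \<noteq> {}"
    and part_cover: "(\<Union>i\<in>{1..N}. T' i) = T"
    and overlap: "\<forall>i\<in>{1..N}. \<exists>L\<ge>1. Om i = interior (\<Union>((add_layer T ^^ L) (T' i)))"
begin

definition cells :: "nat \<Rightarrow> 'a set set" where
  "cells i = (add_layer T ^^ (SOME L. L \<ge> 1 \<and> Om i = interior (\<Union>((add_layer T ^^ L) (T' i))))) (T' i)"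

lemma cells:
  assumes "i \<in> {1..N}"
  shows "Om i = interior (\<Union>(cells i))" "cells i \<subseteq> T" "add_layer T (T' i) \<subseteq> cells i"
proof -
  define L where "L = (SOME L. L \<ge> 1 \<and> Om i = interior (\<Union>((add_layer T ^^ L) (T' i))))"
  have L: "L \<ge> 1 \<and> Om i = interior (\<Union>((add_layer T ^^ L) (T' i)))"
    unfolding L_def by (rule someI_ex) (use overlap assms in auto)
  have cells_eq: "cells i = (add_layer T ^^ L) (T' i)"
    unfolding cells_def L_def ..
  show "Om i = interior (\<Union>(cells i))" using L cells_eq by simp
  show "cells i \<subseteq> T" unfolding cells_eq by (rule add_layer_funpow_subset) (use part assms in auto)
  show "add_layer T (T' i) \<subseteq> cells i" unfolding cells_eq by (rule add_layer_subset_funpow) (use L in auto)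
qed

lemma triangulation_T: "triangulation T"
  and Omega_eq: "\<Omega> = interior (\<Union>T)" and closure_Omega: "closure \<Omega> = \<Union>T"
  and simplex_element: "\<And>\<tau>. \<tau> \<in> T \<Longrightarrow> int DIM('a) simplex \<tau>"
  and open_Omega: "open \<Omega>" and Omega_nonempty: "\<Omega> \<noteq> {}"
  using dom unfolding polyhedral_domain_def mesh_of_def by auto

lemma finite_T: "finite T"
  using triangulation_T unfolding triangulation_def by auto

lemma element:
  assumes "\<tau> \<in> T"
  shows "convex \<tau>" "compact \<tau>" "interior \<tau> \<noteq> {}" "closure (interior \<tau>) = \<tau>"
proof -
  obtain C where C: "\<not> affine_dependent C" "int (card C) = int DIM('a) + 1" "\<tau> = convex hull C"
    using simplex_element[OF assms] unfolding simplex_def by auto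
  show cv: "convex \<tau>" using C by simp
  show cp: "compact \<tau>"
    using C aff_independent_finite[OF C(1)] by (simp add: compact_convex_hull finite_imp_compact)
  have "card C = Suc DIM('a)" using C(2) by simp
  then show ne: "interior \<tau> \<noteq> {}" using C interior_convex_hull_eq_empty by metis
  show "closure (interior \<tau>) = \<tau>"
    using convex_closure_interior[OF cv ne] cp by (simp add: compact_imp_closed)
qed

lemma Omega_subset: "\<Omega> \<subseteq> \<Union>T"
  using closure_Omega closure_subset by blast

lemma interior_element_subset: "\<tau> \<in> T \<Longrightarrow> interior \<tau> \<subseteq> \<Omega>"
  using Omega_eq by (simp add: Sup_upper interior_mono)

text \<open>Distinct elements meet in a common proper face, which avoids the relative
  (here: full) interior of both.\<close>
lemma interior_element_disjoint:
  assumes "\<tau> \<in> T" "\<sigma> \<in> T" "\<tau> \<noteq> \<sigma>"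
  shows "interior \<tau> \<inter> \<sigma> = {}"
proof (rule ccontr)
  assume "interior \<tau> \<inter> \<sigma> \<noteq> {}"
  then obtain x where x: "x \<in> interior \<tau>" "x \<in> \<sigma>" by auto
  have ri: "rel_interior \<tau> = interior \<tau>" "rel_interior \<sigma> = interior \<sigma>"
    using rel_interior_nonempty_interior element assms by auto
  have faces: "(\<tau> \<inter> \<sigma>) face_of \<tau>" "(\<sigma> \<inter> \<tau>) face_of \<sigma>"
    using triangulation_T assms unfolding triangulation_def by auto
  have "\<tau> \<inter> \<sigma> = \<tau>"
    using face_of_disjoint_rel_interior[OF faces(1)] x ri interior_subset by blast
  then have "\<tau> \<inter> rel_interior \<sigma> = {}"
    using face_of_disjoint_rel_interior[OF faces(2)] assms(3) by (metis inf_commute)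
  moreover have "interior \<tau> \<subseteq> interior \<sigma>"
    using \<open>\<tau> \<inter> \<sigma> = \<tau>\<close> interior_mono by blast
  ultimately show False using x ri interior_subset by blast
qed

lemma closed_Union_elements: "S \<subseteq> T \<Longrightarrow> closed (\<Union>S)"
  using finite_T element by (meson closed_Union compact_imp_closed finite_subset subsetD)

lemma subdomain:
  assumes "i \<in> {1..N}"
  shows "open (Om i)" "Om i \<subseteq> \<Omega>" "Om i \<in> sets lebesgue"
proof -
  show "open (Om i)" using cells[OF assms] by simp
  then show "Om i \<in> sets lebesgue"
    by (metis borel_open sets_completionI_sets sets_lborel)
  have "\<Union>(cells i) \<subseteq> \<Union>T" using cells[OF assms] by auto
  then show "Om i \<subseteq> \<Omega>" using cells[OF assms] Omega_eq interior_mono by metis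
qed

lemma Omega_sets_lebesgue: "\<Omega> \<in> sets lebesgue"
  using open_Omega by (metis borel_open sets_completionI_sets sets_lborel)

lemma cell_subset_closure:
  assumes "i \<in> {1..N}" "\<tau> \<in> cells i"
  shows "\<tau> \<subseteq> closure (Om i)"
proof -
  have "interior \<tau> \<subseteq> Om i"
    using cells[OF assms(1)] assms(2) by (simp add: Sup_upper interior_mono)
  then show ?thesis
    using closure_mono element(4) cells(2)[OF assms(1)] assms(2) by blast
qed

lemma interior_element_in_subdomain_iff:
  assumes "i \<in> {1..N}" "\<tau> \<in> T" "x \<in> interior \<tau>"
  shows "x \<in> closure (Om i) \<longleftrightarrow> \<tau> \<in> cells i" "x \<in> Om i \<longleftrightarrow> \<tau> \<in> cells i"
proof -
  have "closure (Om i) \<subseteq> \<Union>(cells i)"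
    using cells[OF assms(1)] closed_Union_elements[of "cells i"]
    by (simp add: closure_minimal interior_subset)
  then have in_cells: "\<tau> \<in> cells i" if "x \<in> closure (Om i)"
    using that interior_element_disjoint[OF assms(2)] cells(2)[OF assms(1)] assms(3) by blast
  have "x \<in> Om i" if "\<tau> \<in> cells i"
    using cells[OF assms(1)] that assms(3) interior_mono[of \<tau> "\<Union>(cells i)"] by auto
  then show "x \<in> closure (Om i) \<longleftrightarrow> \<tau> \<in> cells i" "x \<in> Om i \<longleftrightarrow> \<tau> \<in> cells i"
    using in_cells closure_subset by blast+
qed

lemma element_at_node_in_cells:
  assumes "i \<in> {1..N}" "k \<in> Om i" "\<tau> \<in> T" "k \<in> \<tau>"
  shows "\<tau> \<in> cells i"
proof -
  have "Om i \<inter> closure (interior \<tau>) \<noteq> {}" using element assms by auto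
  then have "Om i \<inter> interior \<tau> \<noteq> {}"
    using open_Int_closure_eq_empty subdomain[OF assms(1)] by blast
  then show ?thesis using interior_element_in_subdomain_iff(2)[OF assms(1,3)] by auto
qed

text \<open>The elements not containing \<open>k\<close> form a closed set; its complement in \<open>\<Omega>\<close> is an
  open neighbourhood of \<open>k\<close> covered by one layer around any \<open>T'\<^sub>i\<close> containing \<open>k\<close>.\<close>
lemma point_in_some_subdomain:
  assumes "k \<in> \<Omega>"
  shows "\<exists>i\<in>{1..N}. k \<in> Om i"
proof -
  obtain \<tau> i where \<tau>: "\<tau> \<in> T" "k \<in> \<tau>" and i: "i \<in> {1..N}" "\<tau> \<in> T' i"
    using Omega_subset assms part_cover by blast
  define K where "K = \<Union>{\<sigma>\<in>T. k \<notin> \<sigma>}"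
  have "open (\<Omega> - K)"
    using open_Omega closed_Union_elements[of "{\<sigma>\<in>T. k \<notin> \<sigma>}"] unfolding K_def by auto
  moreover have "\<Omega> - K \<subseteq> \<Union>(cells i)"
  proof
    fix y assume y: "y \<in> \<Omega> - K"
    then obtain \<sigma> where \<sigma>: "\<sigma> \<in> T" "y \<in> \<sigma>" using Omega_subset by auto
    then have "\<sigma> \<in> add_layer T (T' i)"
      using y \<tau> i unfolding K_def add_layer_def by auto
    then show "y \<in> \<Union>(cells i)" using cells(3)[OF i(1)] \<sigma> by auto
  qed
  moreover have "k \<in> \<Omega> - K" using assms unfolding K_def by auto
  ultimately have "k \<in> interior (\<Union>(cells i))" using interior_maximal by blast
  then show ?thesis using cells(1)[OF i(1)] i(1) by auto
qed

lemma fe_props: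
  "finite X" "X \<subseteq> \<Omega>" "Vh = fspan (\<phi> ` X)"
  "\<And>k l. k \<in> X \<Longrightarrow> l \<in> X \<Longrightarrow> \<phi> k l = (if k = l then 1 else 0)"
  "\<And>k \<tau> x. k \<in> X \<Longrightarrow> \<tau> \<in> T \<Longrightarrow> k \<notin> \<tau> \<Longrightarrow> x \<in> \<tau> \<Longrightarrow> \<phi> k x = 0"
  "\<And>v x. v \<in> Vh \<Longrightarrow> x \<notin> \<Omega> \<Longrightarrow> v x = 0"
  "\<And>v \<tau>. v \<in> Vh \<Longrightarrow> \<tau> \<in> T \<Longrightarrow> \<exists>q. polynomial_function q \<and> (\<forall>x\<in>\<tau>. v x = q x)"
  using fe unfolding nodal_fe_space_def by auto

lemma basis_in_Vh: "k \<in> X \<Longrightarrow> \<phi> k \<in> Vh"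
  using fe_props(3) fun_module.span_base[of "\<phi> k" "\<phi> ` X"] by auto

end

context geneo_setting
begin

text \<open>Only element interiors are constrained: the element boundaries form a null set, on
  which \<open>grad\<close> is a junk value.\<close>
definition pw_poly :: "('a \<Rightarrow> real) set" where
  "pw_poly = {u. \<forall>\<tau>\<in>T. \<exists>q. polynomial_function q \<and> (\<forall>x\<in>interior \<tau>. u x = q x)}"

lemma pw_poly_sum:
  assumes "finite I" "\<And>i. i \<in> I \<Longrightarrow> u i \<in> pw_poly"
  shows "(\<lambda>x. \<Sum>i\<in>I. r i * u i x) \<in> pw_poly"
  unfolding pw_poly_def mem_Collect_eq
proof
  fix \<tau> assume "\<tau> \<in> T"
  then have "\<forall>i\<in>I. \<exists>q. polynomial_function q \<and> (\<forall>x\<in>interior \<tau>. u i x = q x)"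
    using assms(2) unfolding pw_poly_def by auto
  then obtain q where q: "\<And>i. i \<in> I \<Longrightarrow> polynomial_function (q i) \<and> (\<forall>x\<in>interior \<tau>. u i x = q i x)"
    by metis
  have "polynomial_function (\<lambda>x. r i * q i x)" if "i \<in> I" for i
    using polynomial_function_cmul[of "q i" "r i"] q[OF that] by simp
  then have "polynomial_function (\<lambda>x. \<Sum>i\<in>I. r i * q i x)"
    using assms(1) by (intro polynomial_function_sum) auto
  moreover have "\<forall>x\<in>interior \<tau>. (\<Sum>i\<in>I. r i * u i x) = (\<Sum>i\<in>I. r i * q i x)"
    using q by simp
  ultimately show "\<exists>q. polynomial_function q \<and> (\<forall>x\<in>interior \<tau>. (\<Sum>i\<in>I. r i * u i x) = q x)"
    by blast
qed

lemma pw_poly_gradient: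
  assumes "u \<in> pw_poly" "\<tau> \<in> T"
  obtains q D where "polynomial_function q" "continuous_on UNIV D"
    "\<And>x. x \<in> interior \<tau> \<Longrightarrow> u x = q x \<and> GDERIV u x :> D x \<and> grad u x = D x"
proof -
  obtain q where q: "polynomial_function q" "\<forall>x\<in>interior \<tau>. u x = q x"
    using assms unfolding pw_poly_def by auto
  obtain D where D: "continuous_on UNIV D" "\<forall>x. GDERIV q x :> D x"
    using polynomial_function_continuous_gradient q(1) real_polynomial_function_eq by blast
  have "GDERIV u x :> D x" if "x \<in> interior \<tau>" for x
    using GDERIV_cong_open[of "interior \<tau>" x u q] q D that by auto
  with q D show ?thesis by (intro that[of q D]) (auto intro: grad_eqI)
qed

lemma GDERIV_grad_pw_poly:
  assumes "u \<in> pw_poly" "\<tau> \<in> T" "x \<in> interior \<tau>"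
  shows "GDERIV u x :> grad u x"
proof -
  obtain q D where "\<And>x. x \<in> interior \<tau> \<Longrightarrow> u x = q x \<and> GDERIV u x :> D x \<and> grad u x = D x"
    using pw_poly_gradient[OF assms(1,2)] by blast
  then show ?thesis using assms(3) by simp
qed

lemma grad_pw_poly_sum:
  assumes "finite I" "\<And>i. i \<in> I \<Longrightarrow> u i \<in> pw_poly" "\<tau> \<in> T" "x \<in> interior \<tau>"
  shows "grad (\<lambda>y. \<Sum>i\<in>I. r i * u i y) x = (\<Sum>i\<in>I. r i *\<^sub>R grad (u i) x)"
  using assms by (intro grad_eqI GDERIV_sum GDERIV_cmult GDERIV_grad_pw_poly) auto

lemma Vh_subset_pw_poly: "Vh \<subseteq> pw_poly"
  unfolding pw_poly_def using fe_props(7) interior_subset by fastforce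

lemma restr_closure_pw_poly:
  assumes "u \<in> pw_poly" "i \<in> {1..N}"
  shows "restr (closure (Om i)) u \<in> pw_poly"
  unfolding pw_poly_def mem_Collect_eq
proof
  fix \<tau> assume \<tau>: "\<tau> \<in> T"
  obtain q where q: "polynomial_function q" "\<forall>x\<in>interior \<tau>. u x = q x"
    using assms \<tau> unfolding pw_poly_def by auto
  show "\<exists>q. polynomial_function q \<and> (\<forall>x\<in>interior \<tau>. restr (closure (Om i)) u x = q x)"
  proof (cases "\<tau> \<in> cells i")
    case True
    then show ?thesis
      using q interior_element_in_subdomain_iff(1)[OF assms(2) \<tau>] unfolding restr_def by auto
  next
    case False
    then show ?thesis
      using interior_element_in_subdomain_iff(1)[OF assms(2) \<tau>] unfolding restr_def
      by (intro exI[of _ "\<lambda>x. 0"]) auto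
  qed
qed

lemma amax_nonneg: "0 \<le> amax"
proof -
  obtain x where "x \<in> \<Omega>" using Omega_nonempty by auto
  moreover obtain b :: 'a where "b \<in> Basis" using nonempty_Basis by blast
  ultimately have "1 \<le> amax" using A_ell[rule_format, of x b] by simp
  then show ?thesis by simp
qed

lemma A_add: "x \<in> \<Omega> \<Longrightarrow> A x (g + h) = A x g + A x h"
  using A_lin linear_add by blast

lemma A_diff: "x \<in> \<Omega> \<Longrightarrow> A x (g - h) = A x g - A x h"
  using A_lin linear_diff by blast

lemma A_scaleR: "x \<in> \<Omega> \<Longrightarrow> A x (r *\<^sub>R g) = r *\<^sub>R A x g"
  using A_lin linear_cmul by blast

lemma A_sum: "x \<in> \<Omega> \<Longrightarrow> A x (sum f I) = (\<Sum>i\<in>I. A x (f i))"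
  using A_lin real_vector.linear_sum by blast

lemma A_commute: "x \<in> \<Omega> \<Longrightarrow> A x g \<bullet> h = A x h \<bullet> g"
  using A_sym by (metis inner_commute)

lemma A_nonneg: "x \<in> \<Omega> \<Longrightarrow> 0 \<le> A x g \<bullet> g"
  using A_ell by (meson order_trans zero_le_power2)

lemma A_cross_le:
  assumes "x \<in> \<Omega>"
  shows "2 * (A x g \<bullet> h) \<le> A x g \<bullet> g + A x h \<bullet> h"
proof -
  have "0 \<le> A x (g - h) \<bullet> (g - h)" using A_nonneg assms by blast
  also have "\<dots> = A x g \<bullet> g + A x h \<bullet> h - A x g \<bullet> h - A x h \<bullet> g"
    using A_diff[OF assms] by (simp add: inner_diff_left inner_diff_right)
  finally show ?thesis using A_commute[OF assms, of h g] by simp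
qed

text \<open>Polarisation: \<open>4 A g \<cdot> h\<close> is the difference of the energies of \<open>g \<plusminus> h\<close>.\<close>
lemma A_bound:
  assumes "x \<in> \<Omega>"
  shows "\<bar>A x g \<bullet> h\<bar> \<le> amax * (norm g + norm h)\<^sup>2"
proof -
  define P where "P = A x (g + h) \<bullet> (g + h)"
  define M where "M = A x (g - h) \<bullet> (g - h)"
  have "4 * (A x g \<bullet> h) = P - M"
    unfolding P_def M_def using A_add[OF assms] A_diff[OF assms] A_commute[OF assms, of h g]
    by (simp add: inner_add_left inner_add_right inner_diff_left inner_diff_right)
  moreover have "(norm (g + h))\<^sup>2 \<le> (norm g + norm h)\<^sup>2" "(norm (g - h))\<^sup>2 \<le> (norm g + norm h)\<^sup>2"
    by (simp_all add: norm_triangle_ineq norm_triangle_ineq4 power_mono)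
  then have "0 \<le> P" "P \<le> amax * (norm g + norm h)\<^sup>2" "0 \<le> M" "M \<le> amax * (norm g + norm h)\<^sup>2"
    using A_ell assms amax_nonneg unfolding P_def M_def
    by (meson A_nonneg mult_left_mono order_trans)+
  ultimately show ?thesis by linarith
qed

lemma A_expand:
  assumes "x \<in> \<Omega>"
  shows "A x g \<bullet> h = (\<Sum>i\<in>Basis. \<Sum>j\<in>Basis. (g \<bullet> i) * (h \<bullet> j) * (A x i \<bullet> j))"
proof -
  have "A x g = (\<Sum>i\<in>Basis. (g \<bullet> i) *\<^sub>R A x i)"
    using A_sum[OF assms, of "\<lambda>i. (g \<bullet> i) *\<^sub>R i" Basis] A_scaleR[OF assms]
    by (simp add: euclidean_representation)
  moreover have "A x i \<bullet> h = (\<Sum>j\<in>Basis. (h \<bullet> j) * (A x i \<bullet> j))" for i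
  proof -
    have "A x i \<bullet> h = A x i \<bullet> (\<Sum>j\<in>Basis. (h \<bullet> j) *\<^sub>R j)" by (simp add: euclidean_representation)
    then show ?thesis by (simp add: inner_sum_right)
  qed
  ultimately show ?thesis
    by (simp add: inner_sum_left sum_distrib_left mult.assoc)
qed

definition energy_density :: "('a \<Rightarrow> real) \<Rightarrow> ('a \<Rightarrow> real) \<Rightarrow> 'a \<Rightarrow> real" where
  "energy_density u v x = A x (grad u x) \<bullet> grad v x + c x * u x * v x"

lemma aform_eq_integral:
  "S \<in> sets lebesgue \<Longrightarrow> aform A c S u v = (LINT x|lebesgue. indicator S x * energy_density u v x)"
  by (simp add: aform_def energy_density_def integral_restrict_space)

lemma energy_density_nonneg: "x \<in> \<Omega> \<Longrightarrow> 0 \<le> energy_density u u x"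
proof -
  assume x: "x \<in> \<Omega>"
  have "0 \<le> c x * (u x * u x)" using c_nonneg x by simp
  then show ?thesis unfolding energy_density_def using A_nonneg[OF x, of "grad u x"] by (simp add: mult.assoc)
qed

lemma energy_density_commute: "x \<in> \<Omega> \<Longrightarrow> energy_density u v x = energy_density v u x"
  unfolding energy_density_def using A_commute by (simp add: mult_ac)

lemma energy_density_cross_le:
  assumes "x \<in> \<Omega>"
  shows "2 * energy_density u v x \<le> energy_density u u x + energy_density v v x"
proof -
  have "0 \<le> c x * (u x - v x)\<^sup>2" using c_nonneg assms by simp
  then show ?thesis
    using A_cross_le[OF assms, of "grad u x" "grad v x"] unfolding energy_density_def
    by (simp add: power2_eq_square algebra_simps)
qed

lemma energy_density_qform:
  assumes "finite I" "\<And>l. l \<in> I \<Longrightarrow> u l \<in> pw_poly" "\<tau> \<in> T" "x \<in> interior \<tau>"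
  shows "energy_density (\<lambda>y. \<Sum>l\<in>I. e l * u l y) (\<lambda>y. \<Sum>l\<in>I. e l * u l y) x
    = qform I (\<lambda>l l'. energy_density (u l) (u l') x) e"
proof -
  have x: "x \<in> \<Omega>" using assms(3,4) interior_element_subset by blast
  have grad_sum: "grad (\<lambda>y. \<Sum>l\<in>I. e l * u l y) x = (\<Sum>l\<in>I. e l *\<^sub>R grad (u l) x)"
    by (rule grad_pw_poly_sum[OF assms])
  have "A x (\<Sum>l\<in>I. e l *\<^sub>R grad (u l) x) \<bullet> (\<Sum>l\<in>I. e l *\<^sub>R grad (u l) x)
      = (\<Sum>l\<in>I. \<Sum>l'\<in>I. e l * e l' * (A x (grad (u l) x) \<bullet> grad (u l') x))"
    by (simp add: A_sum[OF x] A_scaleR[OF x] A_commute[OF x] inner_sum_left inner_sum_right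
        sum_distrib_left mult.assoc)
  moreover have "c x * (\<Sum>l\<in>I. e l * u l x) * (\<Sum>l\<in>I. e l * u l x)
      = (\<Sum>l\<in>I. \<Sum>l'\<in>I. e l * e l' * (c x * u l x * u l' x))"
    by (simp add: sum_distrib_left sum_distrib_right mult_ac)
  ultimately show ?thesis
    unfolding energy_density_def qform_def grad_sum by (simp add: sum.distrib distrib_left)
qed

end

context geneo_setting
begin

lemma AE_in_interior_element: "AE x in lebesgue. x \<in> \<Omega> \<longrightarrow> (\<exists>\<tau>\<in>T. x \<in> interior \<tau>)"
proof -
  have "(\<Union>\<tau>\<in>T. frontier \<tau>) \<in> null_sets lebesgue"
    unfolding negligible_iff_null_sets[symmetric]
    by (rule negligible_Union) (auto simp: finite_T intro: negligible_convex_frontier element(1))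
  then show ?thesis
  proof (rule AE_not_in[THEN eventually_mono], intro impI)
    fix x assume "x \<notin> (\<Union>\<tau>\<in>T. frontier \<tau>)" "x \<in> \<Omega>"
    moreover obtain \<tau> where "\<tau> \<in> T" "x \<in> \<tau>" using Omega_subset \<open>x \<in> \<Omega>\<close> by auto
    ultimately show "\<exists>\<tau>\<in>T. x \<in> interior \<tau>"
      using element(2) by (auto simp: frontier_def compact_imp_closed)
  qed
qed

lemma c_bounded:
  obtains M where "0 \<le> M" "AE x in lebesgue. x \<in> \<Omega> \<longrightarrow> \<bar>c x\<bar> \<le> M"
proof -
  obtain M where "AE x in lebesgue_on \<Omega>. c x \<le> M" using c_bdd by auto
  then have "AE x in lebesgue. x \<in> \<Omega> \<longrightarrow> c x \<le> M"
    using AE_restrict_space_iff[of \<Omega> lebesgue] Omega_sets_lebesgue by simp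
  then have "AE x in lebesgue. x \<in> \<Omega> \<longrightarrow> \<bar>c x\<bar> \<le> max M 0"
    by (rule eventually_mono) (use c_nonneg in auto)
  then show ?thesis using that[of "max M 0"] by simp
qed

lemma energy_density_element_measurable:
  assumes "u \<in> pw_poly" "v \<in> pw_poly" "\<tau> \<in> T"
  shows "(\<lambda>x. indicator (interior \<tau>) x * energy_density u v x) \<in> borel_measurable lebesgue"
proof -
  obtain qu Du where u: "polynomial_function qu" "continuous_on UNIV Du"
     "\<And>x. x \<in> interior \<tau> \<Longrightarrow> u x = qu x \<and> GDERIV u x :> Du x \<and> grad u x = Du x"
    using pw_poly_gradient[OF assms(1,3)] by blast
  obtain qv Dv where v: "polynomial_function qv" "continuous_on UNIV Dv"
     "\<And>x. x \<in> interior \<tau> \<Longrightarrow> v x = qv x \<and> GDERIV v x :> Dv x \<and> grad v x = Dv x"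
    using pw_poly_gradient[OF assms(2,3)] by blast
  have eq: "indicator (interior \<tau>) x * energy_density u v x = indicator (interior \<tau>) x *
     ((\<Sum>i\<in>Basis. \<Sum>j\<in>Basis. (Du x \<bullet> i) * (Dv x \<bullet> j) * (A x i \<bullet> j)) + c x * qu x * qv x)" for x
  proof (cases "x \<in> interior \<tau>")
    case True
    then show ?thesis
      using u(3) v(3) A_expand interior_element_subset[OF assms(3)] unfolding energy_density_def by auto
  qed simp
  have lebesgue: "f \<in> borel_measurable borel \<Longrightarrow> f \<in> borel_measurable lebesgue" for f :: "'a \<Rightarrow> real"
    by (metis measurable_completion measurable_lborel2)
  have "(\<lambda>x. Du x \<bullet> i) \<in> borel_measurable lebesgue" "(\<lambda>x. Dv x \<bullet> i) \<in> borel_measurable lebesgue" for i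
    by (auto intro!: lebesgue borel_measurable_continuous_onI continuous_intros u(2) v(2))
  moreover have "qu \<in> borel_measurable lebesgue" "qv \<in> borel_measurable lebesgue"
    using u(1) v(1) continuous_on_polymonial_function
    by (auto intro!: lebesgue borel_measurable_continuous_onI)
  moreover have "interior \<tau> \<in> sets lebesgue"
    by (metis borel_open open_interior sets_completionI_sets sets_lborel)
  ultimately show ?thesis
    unfolding eq using A_meas c_meas
    by (intro borel_measurable_times borel_measurable_add borel_measurable_sum
        borel_measurable_indicator) auto
qed

lemma energy_density_element_bounded:
  assumes "u \<in> pw_poly" "v \<in> pw_poly" "\<tau> \<in> T"
  obtains B where "AE x in lebesgue. \<bar>indicator (interior \<tau>) x * energy_density u v x\<bar>
    \<le> B * indicator (interior \<tau>) x"
proof -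
  obtain qu Du where u: "polynomial_function qu" "continuous_on UNIV Du"
     "\<And>x. x \<in> interior \<tau> \<Longrightarrow> u x = qu x \<and> GDERIV u x :> Du x \<and> grad u x = Du x"
    using pw_poly_gradient[OF assms(1,3)] by blast
  obtain qv Dv where v: "polynomial_function qv" "continuous_on UNIV Dv"
     "\<And>x. x \<in> interior \<tau> \<Longrightarrow> v x = qv x \<and> GDERIV v x :> Dv x \<and> grad v x = Dv x"
    using pw_poly_gradient[OF assms(2,3)] by blast
  have bounded_on_\<tau>: "\<exists>B>0. \<forall>x\<in>\<tau>. norm (f x) \<le> B" if "continuous_on UNIV f"
    for f :: "'a \<Rightarrow> 'b::real_normed_vector"
    using compact_imp_bounded[OF compact_continuous_image[OF continuous_on_subset[OF that]
        element(2)[OF assms(3)]]] unfolding bounded_pos by auto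
  obtain Bu Bv Cu Cv where
    "\<forall>x\<in>\<tau>. norm (Du x) \<le> Bu" "\<forall>x\<in>\<tau>. norm (Dv x) \<le> Bv"
    "\<forall>x\<in>\<tau>. \<bar>qu x\<bar> \<le> Cu" "\<forall>x\<in>\<tau>. \<bar>qv x\<bar> \<le> Cv"
    using bounded_on_\<tau>[OF u(2)] bounded_on_\<tau>[OF v(2)]
      bounded_on_\<tau>[OF continuous_on_polymonial_function[OF u(1)]]
      bounded_on_\<tau>[OF continuous_on_polymonial_function[OF v(1)]] by auto
  note bounds = this
  obtain M where M: "0 \<le> M" "AE x in lebesgue. x \<in> \<Omega> \<longrightarrow> \<bar>c x\<bar> \<le> M"
    using c_bounded by blast
  show ?thesis
  proof (rule that[of "amax * (Bu + Bv)\<^sup>2 + M * Cu * Cv"], rule eventually_mono[OF M(2)])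
    fix x assume c_le: "x \<in> \<Omega> \<longrightarrow> \<bar>c x\<bar> \<le> M"
    show "\<bar>indicator (interior \<tau>) x * energy_density u v x\<bar>
      \<le> (amax * (Bu + Bv)\<^sup>2 + M * Cu * Cv) * indicator (interior \<tau>) x"
    proof (cases "x \<in> interior \<tau>")
      case True
      then have x: "x \<in> \<Omega>" "x \<in> \<tau>"
        using interior_element_subset[OF assms(3)] interior_subset by auto
      have "\<bar>A x (Du x) \<bullet> Dv x\<bar> \<le> amax * (norm (Du x) + norm (Dv x))\<^sup>2"
        using A_bound[OF x(1)] .
      also have "\<dots> \<le> amax * (Bu + Bv)\<^sup>2"
        using bounds x amax_nonneg by (intro mult_left_mono power_mono add_mono) auto
      finally have "\<bar>A x (Du x) \<bullet> Dv x\<bar> \<le> amax * (Bu + Bv)\<^sup>2" .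
      moreover have "\<bar>c x * qu x * qv x\<bar> \<le> M * Cu * Cv"
        unfolding abs_mult using c_le x bounds M(1) by (intro mult_mono) auto
      moreover have "energy_density u v x = A x (Du x) \<bullet> Dv x + c x * qu x * qv x"
        using True u(3) v(3) unfolding energy_density_def by simp
      ultimately show ?thesis using True by simp
    qed simp
  qed
qed

text \<open>On each element the energy density is bounded and measurable, and a.e. point of
  \<open>\<Omega>\<close> lies in exactly one element interior.\<close>
lemma energy_density_integrable:
  assumes "u \<in> pw_poly" "v \<in> pw_poly" "S \<in> sets lebesgue" "S \<subseteq> \<Omega>"
  shows "integrable lebesgue (\<lambda>x. indicator S x * energy_density u v x)"
proof -
  let ?f = "\<lambda>\<tau> x. indicator S x * (indicator (interior \<tau>) x * energy_density u v x)"
  have "integrable lebesgue (?f \<tau>)" if \<tau>: "\<tau> \<in> T" for \<tau>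
  proof -
    obtain B where B: "AE x in lebesgue. \<bar>indicator (interior \<tau>) x * energy_density u v x\<bar>
        \<le> B * indicator (interior \<tau>) x"
      using energy_density_element_bounded[OF assms(1,2) \<tau>] by blast
    have "interior \<tau> \<in> lmeasurable"
      using element(2)[OF \<tau>] by (meson bounded_interior compact_imp_bounded lmeasurable_open open_interior)
    then have "integrable lebesgue (\<lambda>x. B * indicator (interior \<tau>) x)"
      using lmeasurable_iff_integrable by auto
    then show ?thesis
    proof (rule Bochner_Integration.integrable_bound)
      show "?f \<tau> \<in> borel_measurable lebesgue"
        using borel_measurable_times[OF borel_measurable_indicator[OF assms(3)]
            energy_density_element_measurable[OF assms(1,2) \<tau>]] by simp
      show "AE x in lebesgue. norm (?f \<tau> x) \<le> norm (B * indicator (interior \<tau>) x)"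
        using B by (rule eventually_mono) (auto simp: indicator_def abs_mult split: if_splits)
    qed
  qed
  then have sum_integrable: "integrable lebesgue (\<lambda>x. \<Sum>\<tau>\<in>T. ?f \<tau> x)"
    by (intro Bochner_Integration.integrable_sum) auto
  have ae: "AE x in lebesgue. (\<Sum>\<tau>\<in>T. ?f \<tau> x) = indicator S x * energy_density u v x"
    using AE_in_interior_element
  proof (rule eventually_mono)
    fix x assume x: "x \<in> \<Omega> \<longrightarrow> (\<exists>\<tau>\<in>T. x \<in> interior \<tau>)"
    show "(\<Sum>\<tau>\<in>T. ?f \<tau> x) = indicator S x * energy_density u v x"
    proof (cases "x \<in> S")
      case True
      then obtain \<tau> where \<tau>: "\<tau> \<in> T" "x \<in> interior \<tau>" using x assms(4) by auto
      have "x \<notin> interior \<sigma>" if "\<sigma> \<in> T" "\<sigma> \<noteq> \<tau>" for \<sigma>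
        using interior_element_disjoint[OF that(1) \<tau>(1)] that(2) \<tau>(2) interior_subset by blast
      then have "(\<Sum>\<tau>\<in>T. ?f \<tau> x) = (\<Sum>\<tau>\<in>{\<tau>}. ?f \<tau> x)"
        by (intro sum.mono_neutral_right) (auto simp: \<tau> finite_T)
      then show ?thesis using \<tau> by simp
    qed simp
  qed
  have "(\<lambda>x. indicator S x * energy_density u v x) \<in> borel_measurable lebesgue"
    by (rule borel_measurable_AE[OF _ ae]) (use sum_integrable in auto)
  then show ?thesis using integrable_cong_AE_imp[OF sum_integrable _ ae] by blast
qed

lemma aform_commute:
  assumes "S \<in> sets lebesgue" "S \<subseteq> \<Omega>"
  shows "aform A c S u v = aform A c S v u"
  unfolding aform_eq_integral[OF assms(1)]
proof (rule Bochner_Integration.integral_cong[OF refl])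
  fix x
  show "indicator S x * energy_density u v x = indicator S x * energy_density v u x"
    using energy_density_commute[of x u v] assms(2) by (cases "x \<in> S") auto
qed

lemma aform_nonneg:
  assumes "S \<in> sets lebesgue" "S \<subseteq> \<Omega>"
  shows "0 \<le> aform A c S u u"
  unfolding aform_eq_integral[OF assms(1)]
proof (rule Bochner_Integration.integral_nonneg)
  fix x
  show "0 \<le> indicator S x * energy_density u u x"
    using energy_density_nonneg[of x u] assms(2) by (cases "x \<in> S") auto
qed

lemma aform_cong_open:
  assumes "open S" "\<And>x. x \<in> S \<Longrightarrow> u x = u' x" "\<And>x. x \<in> S \<Longrightarrow> v x = v' x"
  shows "aform A c S u v = aform A c S u' v'"
  unfolding aform_def
proof (rule Bochner_Integration.integral_cong[OF refl])
  fix x assume "x \<in> space (lebesgue_on S)"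
  then have x: "x \<in> S" by simp
  then show "A x (grad u x) \<bullet> grad v x + c x * u x * v x = A x (grad u' x) \<bullet> grad v' x + c x * u' x * v' x"
    using grad_cong_open[OF assms(1) x assms(2)] grad_cong_open[OF assms(1) x assms(3)] assms(2,3) by simp
qed

lemma aform_qform:
  assumes I: "finite I" "\<And>l. l \<in> I \<Longrightarrow> u l \<in> pw_poly" and S: "S \<in> sets lebesgue" "S \<subseteq> \<Omega>"
  shows "aform A c S (\<lambda>x. \<Sum>l\<in>I. e l * u l x) (\<lambda>x. \<Sum>l\<in>I. e l * u l x)
    = qform I (\<lambda>l l'. aform A c S (u l) (u l')) e"
proof -
  let ?g = "\<lambda>l l' x. e l * e l' * (indicator S x * energy_density (u l) (u l') x)"
  have integrable: "integrable lebesgue (?g l l')" if "l \<in> I" "l' \<in> I" for l l'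
    using energy_density_integrable[OF I(2) I(2) S] that by simp
  have "AE x in lebesgue. indicator S x * energy_density (\<lambda>x. \<Sum>l\<in>I. e l * u l x) (\<lambda>x. \<Sum>l\<in>I. e l * u l x) x
      = (\<Sum>l\<in>I. \<Sum>l'\<in>I. ?g l l' x)"
    using AE_in_interior_element
  proof (rule eventually_mono)
    fix x assume x: "x \<in> \<Omega> \<longrightarrow> (\<exists>\<tau>\<in>T. x \<in> interior \<tau>)"
    show "indicator S x * energy_density (\<lambda>x. \<Sum>l\<in>I. e l * u l x) (\<lambda>x. \<Sum>l\<in>I. e l * u l x) x
      = (\<Sum>l\<in>I. \<Sum>l'\<in>I. ?g l l' x)"
    proof (cases "x \<in> S")
      case True
      then obtain \<tau> where "\<tau> \<in> T" "x \<in> interior \<tau>" using x S(2) by auto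
      then show ?thesis
        using True energy_density_qform[OF I] unfolding qform_def by simp
    qed simp
  qed
  then have "aform A c S (\<lambda>x. \<Sum>l\<in>I. e l * u l x) (\<lambda>x. \<Sum>l\<in>I. e l * u l x)
      = (LINT x|lebesgue. (\<Sum>l\<in>I. \<Sum>l'\<in>I. ?g l l' x))"
    unfolding aform_eq_integral[OF S(1)]
    by (intro integral_cong_AE)
      (use integrable I(1) energy_density_integrable[OF pw_poly_sum[OF I] pw_poly_sum[OF I] S]
        in \<open>auto intro!: borel_measurable_integrable\<close>)
  also have "\<dots> = qform I (\<lambda>l l'. aform A c S (u l) (u l')) e"
    unfolding qform_def aform_eq_integral[OF S(1)] using integrable I(1)
    by (simp add: Bochner_Integration.integral_sum)
  finally show ?thesis .
qed

lemma sum_aform_subdomains: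
  assumes "\<And>j. j \<in> {1..N} \<Longrightarrow> w j \<in> pw_poly"
  shows "(\<Sum>j\<in>{1..N}. aform A c (Om j) (w j) (w j))
    = (LINT x|lebesgue. (\<Sum>j\<in>{1..N}. indicator (Om j) x * energy_density (w j) (w j) x))"
proof -
  have "(\<Sum>j\<in>{1..N}. aform A c (Om j) (w j) (w j))
      = (\<Sum>j\<in>{1..N}. LINT x|lebesgue. indicator (Om j) x * energy_density (w j) (w j) x)"
    by (intro sum.cong refl aform_eq_integral subdomain(3)) simp
  also have "\<dots> = (LINT x|lebesgue. (\<Sum>j\<in>{1..N}. indicator (Om j) x * energy_density (w j) (w j) x))"
    by (rule Bochner_Integration.integral_sum[symmetric])
      (simp add: energy_density_integrable assms subdomain(2,3))
  finally show ?thesis .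
qed

end

section \<open>Finite overlap\<close>

context geneo_setting
begin

lemma card_subdomains_le_k0:
  assumes "\<tau> \<in> T" "x \<in> interior \<tau>"
  shows "card {j\<in>{1..N}. x \<in> Om j} \<le> k0 T N Om"
proof -
  have "{j\<in>{1..N}. x \<in> Om j} = {j\<in>{1..N}. \<tau> \<in> cells j}"
    using interior_element_in_subdomain_iff(2)[OF _ assms] by auto
  also have "card \<dots> \<le> card {j\<in>{1..N}. \<tau> \<subseteq> closure (Om j)}"
    using cell_subset_closure by (intro card_mono) auto
  also have "\<dots> \<le> k0 T N Om"
    unfolding k0_def using finite_T assms(1) by (intro Max_ge) auto
  finally show ?thesis .
qed

lemma sum_aform_subdomains_le:
  assumes "v \<in> pw_poly"
  shows "(\<Sum>j\<in>{1..N}. aform A c (Om j) v v) \<le> real (k0 T N Om) * aform A c \<Omega> v v"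
proof -
  have "(\<Sum>j\<in>{1..N}. aform A c (Om j) v v)
      = (LINT x|lebesgue. (\<Sum>j\<in>{1..N}. indicator (Om j) x * energy_density v v x))"
    using sum_aform_subdomains[of "\<lambda>_. v"] assms by simp
  also have "\<dots> \<le> (LINT x|lebesgue. real (k0 T N Om) * (indicator \<Omega> x * energy_density v v x))"
  proof (rule integral_mono_AE)
    show "integrable lebesgue (\<lambda>x. \<Sum>j\<in>{1..N}. indicator (Om j) x * energy_density v v x)"
      using energy_density_integrable[OF assms assms] subdomain(2,3)
      by (intro Bochner_Integration.integrable_sum) auto
    show "integrable lebesgue (\<lambda>x. real (k0 T N Om) * (indicator \<Omega> x * energy_density v v x))"
      using energy_density_integrable[OF assms assms Omega_sets_lebesgue] by auto
    show "AE x in lebesgue. (\<Sum>j\<in>{1..N}. indicator (Om j) x * energy_density v v x)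
        \<le> real (k0 T N Om) * (indicator \<Omega> x * energy_density v v x)"
      using AE_in_interior_element
    proof (rule eventually_mono)
      fix x assume x: "x \<in> \<Omega> \<longrightarrow> (\<exists>\<tau>\<in>T. x \<in> interior \<tau>)"
      show "(\<Sum>j\<in>{1..N}. indicator (Om j) x * energy_density v v x)
        \<le> real (k0 T N Om) * (indicator \<Omega> x * energy_density v v x)"
      proof (cases "x \<in> \<Omega>")
        case True
        then obtain \<tau> where "\<tau> \<in> T" "x \<in> interior \<tau>" using x by auto
        then show ?thesis
          using True card_subdomains_le_k0 energy_density_nonneg[OF True, of v]
          by (simp add: sum_indicator_mult mult_right_mono)
      next
        case False
        then have "x \<notin> Om j" if "j \<in> {1..N}" for j using subdomain(2) that by auto
        then show ?thesis using False by simp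
      qed
    qed
  qed
  also have "\<dots> = real (k0 T N Om) * aform A c \<Omega> v v"
    by (simp add: aform_eq_integral[OF Omega_sets_lebesgue])
  finally show ?thesis .
qed

text \<open>At a point in at most \<open>k\<^sub>0\<close> subdomains, only the functions \<open>w\<^sub>j\<close> of these subdomains
  contribute, and Cauchy-Schwarz for the energy density bounds the cross terms.\<close>
lemma energy_density_sum_le:
  assumes w: "\<And>j. j \<in> {1..N} \<Longrightarrow> w j \<in> pw_poly"
      "\<And>j x. j \<in> {1..N} \<Longrightarrow> x \<notin> closure (Om j) \<Longrightarrow> w j x = 0"
    and \<tau>: "\<tau> \<in> T" "x \<in> interior \<tau>"
  shows "energy_density (\<lambda>y. \<Sum>j\<in>{1..N}. w j y) (\<lambda>y. \<Sum>j\<in>{1..N}. w j y) x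
    \<le> real (k0 T N Om) * (\<Sum>j\<in>{1..N}. indicator (Om j) x * energy_density (w j) (w j) x)"
proof -
  define J where "J = {j\<in>{1..N}. x \<in> Om j}"
  have x: "x \<in> \<Omega>" using \<tau> interior_element_subset by blast
  have vanish: "energy_density (w j) v x = 0" if j: "j \<in> {1..N}" "x \<notin> Om j" for j v
  proof -
    have "w j y = 0" if "y \<in> interior \<tau>" for y
      using w(2)[OF j(1)] interior_element_in_subdomain_iff[OF j(1) \<tau>(1) that]
        interior_element_in_subdomain_iff(2)[OF j(1) \<tau>] j(2) by auto
    then show ?thesis
      using grad_zero_open[of "interior \<tau>" x "w j"] \<tau>(2) A_scaleR[OF x, of 0]
      unfolding energy_density_def by simp
  qed
  have "energy_density (\<lambda>y. \<Sum>j\<in>{1..N}. w j y) (\<lambda>y. \<Sum>j\<in>{1..N}. w j y) x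
      = (\<Sum>j\<in>{1..N}. \<Sum>k\<in>{1..N}. energy_density (w j) (w k) x)"
    using energy_density_qform[of "{1..N}" w \<tau> x "\<lambda>_. 1"] w(1) \<tau> by (simp add: qform_def)
  also have "\<dots> = (\<Sum>j\<in>J. \<Sum>k\<in>{1..N}. energy_density (w j) (w k) x)"
    using vanish by (intro sum.mono_neutral_right) (auto simp: J_def)
  also have "\<dots> = (\<Sum>j\<in>J. \<Sum>k\<in>J. energy_density (w j) (w k) x)"
    using vanish energy_density_commute[OF x]
    by (intro sum.cong refl sum.mono_neutral_right) (auto simp: J_def)
  also have "\<dots> \<le> real (card J) * (\<Sum>j\<in>J. energy_density (w j) (w j) x)"
    using energy_density_cross_le[OF x] by (intro double_sum_le_card_diag) (auto simp: J_def)
  also have "\<dots> \<le> real (k0 T N Om) * (\<Sum>j\<in>J. energy_density (w j) (w j) x)"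
    using card_subdomains_le_k0[OF \<tau>] energy_density_nonneg[OF x]
    unfolding J_def by (intro mult_right_mono sum_nonneg) auto
  also have "(\<Sum>j\<in>J. energy_density (w j) (w j) x)
      = (\<Sum>j\<in>{1..N}. indicator (Om j) x * energy_density (w j) (w j) x)"
    unfolding J_def by (simp add: sum_indicator_mult)
  finally show ?thesis .
qed

lemma aform_sum_le_k0:
  assumes w: "\<And>j. j \<in> {1..N} \<Longrightarrow> w j \<in> pw_poly"
      "\<And>j x. j \<in> {1..N} \<Longrightarrow> x \<notin> closure (Om j) \<Longrightarrow> w j x = 0"
  shows "aform A c \<Omega> (\<lambda>x. \<Sum>j\<in>{1..N}. w j x) (\<lambda>x. \<Sum>j\<in>{1..N}. w j x)
    \<le> real (k0 T N Om) * (\<Sum>j\<in>{1..N}. aform A c (Om j) (w j) (w j))"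
proof -
  define W where "W = (\<lambda>x. \<Sum>j\<in>{1..N}. w j x)"
  have W: "W \<in> pw_poly"
    unfolding W_def using pw_poly_sum[of "{1..N}" w "\<lambda>_. 1"] w(1) by simp
  have "aform A c \<Omega> W W = (LINT x|lebesgue. indicator \<Omega> x * energy_density W W x)"
    by (rule aform_eq_integral[OF Omega_sets_lebesgue])
  also have "\<dots> \<le> (LINT x|lebesgue. real (k0 T N Om) *
      (\<Sum>j\<in>{1..N}. indicator (Om j) x * energy_density (w j) (w j) x))"
  proof (rule integral_mono_AE)
    show "integrable lebesgue (\<lambda>x. indicator \<Omega> x * energy_density W W x)"
      using energy_density_integrable[OF W W Omega_sets_lebesgue] by simp
    show "integrable lebesgue (\<lambda>x. real (k0 T N Om) *
        (\<Sum>j\<in>{1..N}. indicator (Om j) x * energy_density (w j) (w j) x))"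
      using energy_density_integrable w(1) subdomain(2,3)
      by (intro integrable_mult_right Bochner_Integration.integrable_sum) auto
    show "AE x in lebesgue. indicator \<Omega> x * energy_density W W x
        \<le> real (k0 T N Om) * (\<Sum>j\<in>{1..N}. indicator (Om j) x * energy_density (w j) (w j) x)"
      using AE_in_interior_element
    proof (rule eventually_mono)
      fix x assume x: "x \<in> \<Omega> \<longrightarrow> (\<exists>\<tau>\<in>T. x \<in> interior \<tau>)"
      show "indicator \<Omega> x * energy_density W W x
        \<le> real (k0 T N Om) * (\<Sum>j\<in>{1..N}. indicator (Om j) x * energy_density (w j) (w j) x)"
      proof (cases "x \<in> \<Omega>")
        case True
        then obtain \<tau> where "\<tau> \<in> T" "x \<in> interior \<tau>" using x by auto
        then show ?thesis using energy_density_sum_le[OF w] True unfolding W_def by simp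
      next
        case False
        then have "x \<notin> Om j" if "j \<in> {1..N}" for j using subdomain(2) that by auto
        then show ?thesis using False by simp
      qed
    qed
  qed
  also have "\<dots> = real (k0 T N Om) * (\<Sum>j\<in>{1..N}. aform A c (Om j) (w j) (w j))"
    using sum_aform_subdomains[OF w(1)] by simp
  finally show ?thesis unfolding W_def .
qed

end

section \<open>The partition of unity\<close>

context geneo_setting
begin

lemma basis_vanishes_outside_closure:
  assumes "k \<in> X" "i \<in> {1..N}" "k \<in> Om i" "x \<notin> closure (Om i)"
  shows "\<phi> k x = 0"
proof (cases "x \<in> \<Omega>")
  case True
  then obtain \<tau> where \<tau>: "\<tau> \<in> T" "x \<in> \<tau>" using Omega_subset by auto
  have "k \<notin> \<tau>"
    using element_at_node_in_cells[OF assms(2,3) \<tau>(1)] cell_subset_closure[OF assms(2)] \<tau>(2) assms(4)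
    by blast
  then show ?thesis using fe_props(5)[OF assms(1) \<tau>(1)] \<tau> by auto
qed (use fe_props(6)[OF basis_in_Vh[OF assms(1)]] in auto)

lemma Xi_eq:
  assumes "i \<in> {1..N}"
  shows "Xi N Om X \<phi> i w = (\<lambda>x. \<Sum>k\<in>{k\<in>X. k \<in> Om i}. (w k / real (mu N Om k)) * \<phi> k x)"
  unfolding Xi_def restr_def using basis_vanishes_outside_closure[OF _ assms]
  by (intro ext sum.cong) auto

lemma Xi_pw_poly: "i \<in> {1..N} \<Longrightarrow> Xi N Om X \<phi> i w \<in> pw_poly"
  unfolding Xi_eq using fe_props(1) basis_in_Vh Vh_subset_pw_poly
  by (intro pw_poly_sum) auto

lemma Xi_vanishes_outside_closure: "x \<notin> closure (Om i) \<Longrightarrow> Xi N Om X \<phi> i w x = 0"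
  unfolding Xi_def restr_def by simp

lemma RT_Xi: "RT (Om i) (Xi N Om X \<phi> i w) = Xi N Om X \<phi> i w"
  unfolding RT_def restr_def using Xi_vanishes_outside_closure by auto

lemma Xi_sum:
  assumes "finite I"
  shows "Xi N Om X \<phi> j (\<lambda>x. \<Sum>l\<in>I. r l * f l x) = (\<lambda>x. \<Sum>l\<in>I. r l * Xi N Om X \<phi> j (f l) x)"
proof
  fix x
  define \<psi> where "\<psi> k = restr (closure (Om j)) (\<phi> k) x / real (mu N Om k)" for k
  have "Xi N Om X \<phi> j (\<lambda>x. \<Sum>l\<in>I. r l * f l x) x = (\<Sum>k\<in>{k\<in>X. k \<in> Om j}. \<Sum>l\<in>I. r l * f l k * \<psi> k)"
    unfolding Xi_def \<psi>_def by (simp add: sum_divide_distrib sum_distrib_right)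
  also have "\<dots> = (\<Sum>l\<in>I. \<Sum>k\<in>{k\<in>X. k \<in> Om j}. r l * f l k * \<psi> k)"
    by (rule sum.swap)
  also have "\<dots> = (\<Sum>l\<in>I. r l * Xi N Om X \<phi> j (f l) x)"
    unfolding Xi_def \<psi>_def by (simp add: sum_distrib_left mult_ac)
  finally show "Xi N Om X \<phi> j (\<lambda>x. \<Sum>l\<in>I. r l * f l x) x = (\<Sum>l\<in>I. r l * Xi N Om X \<phi> j (f l) x)" .
qed

lemma Vh_nodal_expansion:
  assumes "v \<in> Vh"
  shows "v = (\<lambda>x. \<Sum>k\<in>X. v k * \<phi> k x)"
proof -
  have "inj_on \<phi> X"
    by (rule inj_onI) (metis fe_props(4) zero_neq_one)
  then obtain r where r: "v = (\<lambda>x. \<Sum>k\<in>X. r k * \<phi> k x)"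
    using fspan_expansion fe_props(1,3) assms by metis
  have "v l = r l" if "l \<in> X" for l
  proof -
    have "v l = (\<Sum>k\<in>X. if k = l then r k else 0)"
      unfolding r by (intro sum.cong) (use fe_props(4) that in auto)
    then show ?thesis using fe_props(1) that by simp
  qed
  then show ?thesis using r by (simp cong: sum.cong)
qed

text \<open>Every node of \<open>V\<^sup>h\<close> lies in \<open>\<mu>\<^sub>k > 0\<close> subdomains, so the weights \<open>1/\<mu>\<^sub>k\<close> add up to one.\<close>
lemma partition_of_unity:
  assumes "v \<in> Vh"
  shows "v = (\<lambda>x. \<Sum>j\<in>{1..N}. Xi N Om X \<phi> j (restr (closure (Om j)) v) x)"
proof
  fix x
  have mu_pos: "0 < mu N Om k" if k: "k \<in> X" for k
  proof -
    obtain i where "i \<in> {1..N}" "k \<in> Om i"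
      using point_in_some_subdomain fe_props(2) k by blast
    then show ?thesis by (auto simp: mu_def card_gt_0_iff)
  qed
  have "(\<Sum>j\<in>{1..N}. Xi N Om X \<phi> j (restr (closure (Om j)) v) x)
      = (\<Sum>j\<in>{1..N}. \<Sum>k\<in>{k\<in>X. k \<in> Om j}. v k / real (mu N Om k) * \<phi> k x)"
  proof (rule sum.cong[OF refl])
    fix j assume "j \<in> {1..N}"
    show "Xi N Om X \<phi> j (restr (closure (Om j)) v) x
      = (\<Sum>k\<in>{k\<in>X. k \<in> Om j}. v k / real (mu N Om k) * \<phi> k x)"
      unfolding Xi_eq[OF \<open>j \<in> {1..N}\<close>] restr_def using closure_subset by (intro sum.cong) auto
  qed
  also have "\<dots> = (\<Sum>k\<in>X. \<Sum>j\<in>{j\<in>{1..N}. k \<in> Om j}. v k / real (mu N Om k) * \<phi> k x)"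
    by (rule sum.swap_restrict) (simp_all add: fe_props(1))
  also have "\<dots> = (\<Sum>k\<in>X. v k * \<phi> k x)"
  proof (rule sum.cong[OF refl])
    fix k assume "k \<in> X"
    have "(\<Sum>j\<in>{j\<in>{1..N}. k \<in> Om j}. v k / real (mu N Om k) * \<phi> k x)
        = real (mu N Om k) * (v k / real (mu N Om k) * \<phi> k x)"
      by (simp add: mu_def)
    then show "(\<Sum>j\<in>{j\<in>{1..N}. k \<in> Om j}. v k / real (mu N Om k) * \<phi> k x) = v k * \<phi> k x"
      using mu_pos[OF \<open>k \<in> X\<close>] by simp
  qed
  also have "\<dots> = v x" using Vh_nodal_expansion[OF assms] by metis
  finally show "v x = (\<Sum>j\<in>{1..N}. Xi N Om X \<phi> j (restr (closure (Om j)) v) x)" by simp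
qed

end

section \<open>The local spectral splitting and the main estimate\<close>

context geneo_setting
begin

lemma eigenfunction_pw_poly:
  assumes j: "j \<in> {1..N}"
    and eig: "geneo_eigensystem (aform A c (Om j)) (Xi N Om X \<phi> j) (Vtilde Vh (Om j)) lamj pj"
    and l: "l \<in> {1..fdim (Vtilde Vh (Om j))}"
  shows "pj l \<in> pw_poly"
  using geneo_eigensystemD(1)[OF eig l] restr_closure_pw_poly[OF _ j] Vh_subset_pw_poly
  unfolding geneo_eigenpair_def Vtilde_def by auto

lemma gram_high_modes_le:
  fixes lamj :: "nat \<Rightarrow> ereal" and pj :: "nat \<Rightarrow> 'a \<Rightarrow> real"
  assumes j: "j \<in> {1..N}"
    and eig: "geneo_eigensystem (aform A c (Om j)) (Xi N Om X \<phi> j) (Vtilde Vh (Om j)) lamj pj"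
  defines "I \<equiv> {1..fdim (Vtilde Vh (Om j))}"
  shows "t * qform I (\<lambda>l l'. aform A c (Om j) (Xi N Om X \<phi> j (pj l)) (Xi N Om X \<phi> j (pj l')))
      (\<lambda>l. if ereal t \<le> lamj l then r l else 0)
    \<le> qform I (\<lambda>l l'. aform A c (Om j) (pj l) (pj l')) r"
proof -
  let ?a = "aform A c (Om j)" and ?\<Xi> = "Xi N Om X \<phi> j"
  have I: "finite I" unfolding I_def by simp
  have Oj: "Om j \<in> sets lebesgue" "Om j \<subseteq> \<Omega>" using subdomain[OF j] by auto
  note pair = geneo_eigensystemD(1)[OF eig, folded I_def]
  have p: "pj l \<in> Vtilde Vh (Om j)" if "l \<in> I" for l
    using pair[OF that] unfolding geneo_eigenpair_def by auto
  show ?thesis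
  proof (rule qform_high_modes_le)
    show "?a (pj l) (pj l') = s * ?a (?\<Xi> (pj l)) (?\<Xi> (pj l'))" if "l \<in> I" "l' \<in> I" "lamj l = ereal s" for l l' s
      using pair[OF that(1)] p[OF that(2)] that(3) unfolding geneo_eigenpair_def by auto
    show "?a (?\<Xi> (pj l)) (?\<Xi> (pj l')) = 0" if "l \<in> I" "l' \<in> I" "lamj l = \<infinity>" for l l'
      using pair[OF that(1)] p[OF that(2)] that(3) unfolding geneo_eigenpair_def by auto
    show "lamj l \<noteq> -\<infinity>" if "l \<in> I" for l
      using pair[OF that] unfolding geneo_eigenpair_def by auto
    show "0 \<le> qform I (\<lambda>l l'. ?a (pj l) (pj l')) y" for y
      using aform_nonneg[OF Oj, of "\<lambda>x. \<Sum>l\<in>I. y l * pj l x"]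
        aform_qform[OF I _ Oj, where u=pj and e=y] eigenfunction_pw_poly[OF j eig]
      unfolding I_def by simp
    show "0 \<le> qform I (\<lambda>l l'. ?a (?\<Xi> (pj l)) (?\<Xi> (pj l'))) y" for y
      using aform_nonneg[OF Oj, of "\<lambda>x. \<Sum>l\<in>I. y l * ?\<Xi> (pj l) x"]
        aform_qform[OF I _ Oj, where u="\<lambda>l. ?\<Xi> (pj l)" and e=y] Xi_pw_poly[OF j] by simp
  qed (use I aform_commute[OF Oj] in auto)
qed

lemma local_spectral_split:
  fixes lamj :: "nat \<Rightarrow> ereal" and pj :: "nat \<Rightarrow> 'a \<Rightarrow> real"
  assumes j: "j \<in> {1..N}"
    and eig: "geneo_eigensystem (aform A c (Om j)) (Xi N Om X \<phi> j) (Vtilde Vh (Om j)) lamj pj"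
    and t: "lamj (m + 1) = ereal t"
    and v: "v \<in> Vh"
  obtains z e where "z \<in> fspan ((\<lambda>l. Xi N Om X \<phi> j (pj l)) ` {1..m})" "e \<in> pw_poly"
    "\<And>x. x \<notin> closure (Om j) \<Longrightarrow> e x = 0"
    "Xi N Om X \<phi> j (restr (closure (Om j)) v) = (\<lambda>x. z x + e x)"
    "t * aform A c (Om j) e e \<le> aform A c (Om j) v v"
proof -
  define I where "I = {1..fdim (Vtilde Vh (Om j))}"
  have I: "finite I" unfolding I_def by simp
  let ?a = "aform A c (Om j)" and ?\<Xi> = "Xi N Om X \<phi> j"
  have "restr (closure (Om j)) v \<in> fspan (pj ` I)"
    using geneo_eigensystemD(3)[OF eig] v unfolding I_def Vtilde_def by auto
  then obtain r where r: "restr (closure (Om j)) v = (\<lambda>x. \<Sum>l\<in>I. r l * pj l x)"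
    using fspan_expansion[OF I geneo_eigensystemD(2)[OF eig, folded I_def]] by blast
  define high where "high l \<longleftrightarrow> ereal t \<le> lamj l" for l
  define z where "z = (\<lambda>x. \<Sum>l\<in>I. (if high l then 0 else r l) * ?\<Xi> (pj l) x)"
  define e where "e = (\<lambda>x. \<Sum>l\<in>I. (if high l then r l else 0) * ?\<Xi> (pj l) x)"
  show ?thesis
  proof (rule that[of z e])
    show "z \<in> fspan ((\<lambda>l. ?\<Xi> (pj l)) ` {1..m})"
      unfolding z_def
    proof (rule sum_in_fspan)
      fix l assume "l \<in> I" "(if high l then 0 else r l) \<noteq> 0"
      then have "\<not> lamj (m + 1) \<le> lamj l" using t unfolding high_def by auto
      then have "l \<in> {1..m}"
        using geneo_eigensystemD(4)[OF eig, of "m + 1" l] \<open>l \<in> I\<close> by (fastforce simp: I_def)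
      then show "?\<Xi> (pj l) \<in> (\<lambda>l. ?\<Xi> (pj l)) ` {1..m}" by blast
    qed
    show "e \<in> pw_poly" unfolding e_def using Xi_pw_poly[OF j] I by (intro pw_poly_sum) auto
    show "e x = 0" if "x \<notin> closure (Om j)" for x
      unfolding e_def using Xi_vanishes_outside_closure[OF that] by simp
    show "?\<Xi> (restr (closure (Om j)) v) = (\<lambda>x. z x + e x)"
      unfolding r Xi_sum[OF I] z_def e_def by (auto simp: sum.distrib[symmetric] intro!: sum.cong)
    have Oj: "Om j \<in> sets lebesgue" "Om j \<subseteq> \<Omega>" using subdomain[OF j] by auto
    have "t * ?a e e = t * qform I (\<lambda>l l'. ?a (?\<Xi> (pj l)) (?\<Xi> (pj l'))) (\<lambda>l. if high l then r l else 0)"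
      unfolding e_def using Xi_pw_poly[OF j] Oj by (subst aform_qform[OF I]) auto
    also have "\<dots> \<le> qform I (\<lambda>l l'. ?a (pj l) (pj l')) r"
      unfolding high_def I_def by (rule gram_high_modes_le[OF j eig])
    also have "\<dots> = ?a (restr (closure (Om j)) v) (restr (closure (Om j)) v)"
      unfolding r using eigenfunction_pw_poly[OF j eig] Oj
      by (subst aform_qform[OF I]) (auto simp: I_def)
    also have "\<dots> = ?a v v"
      using subdomain(1)[OF j] closure_subset by (intro aform_cong_open) (auto simp: restr_def)
    finally show "t * ?a e e \<le> ?a v v" .
  qed
qed

lemma local_spectral_splits:
  fixes lam :: "nat \<Rightarrow> nat \<Rightarrow> ereal" and p :: "nat \<Rightarrow> nat \<Rightarrow> 'a \<Rightarrow> real" and m :: "nat \<Rightarrow> nat"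
  assumes eig: "\<forall>j\<in>{1..N}. geneo_eigensystem (aform A c (Om j)) (Xi N Om X \<phi> j) (Vtilde Vh (Om j)) (lam j) (p j)"
    and t: "\<And>j. j \<in> {1..N} \<Longrightarrow> lam j (m j + 1) = ereal (t j)"
    and v: "v \<in> Vh"
  obtains z e where
    "\<And>j. j \<in> {1..N} \<Longrightarrow> z j \<in> fspan ((\<lambda>l. Xi N Om X \<phi> j (p j l)) ` {1..m j})"
    "\<And>j. j \<in> {1..N} \<Longrightarrow> e j \<in> pw_poly"
    "\<And>j x. j \<in> {1..N} \<Longrightarrow> x \<notin> closure (Om j) \<Longrightarrow> e j x = 0"
    "\<And>j. j \<in> {1..N} \<Longrightarrow> Xi N Om X \<phi> j (restr (closure (Om j)) v) = (\<lambda>x. z j x + e j x)"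
    "\<And>j. j \<in> {1..N} \<Longrightarrow> t j * aform A c (Om j) (e j) (e j) \<le> aform A c (Om j) v v"
proof -
  define splits where "splits j z e \<longleftrightarrow>
      z \<in> fspan ((\<lambda>l. Xi N Om X \<phi> j (p j l)) ` {1..m j}) \<and> e \<in> pw_poly
      \<and> (\<forall>x. x \<notin> closure (Om j) \<longrightarrow> e x = 0)
      \<and> Xi N Om X \<phi> j (restr (closure (Om j)) v) = (\<lambda>x. z x + e x)
      \<and> t j * aform A c (Om j) e e \<le> aform A c (Om j) v v" for j z e
  have "\<forall>j\<in>{1..N}. \<exists>z e. splits j z e"
  proof
    fix j assume j: "j \<in> {1..N}"
    obtain z e where "z \<in> fspan ((\<lambda>l. Xi N Om X \<phi> j (p j l)) ` {1..m j})" "e \<in> pw_poly"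
      "\<And>x. x \<notin> closure (Om j) \<Longrightarrow> e x = 0"
      "Xi N Om X \<phi> j (restr (closure (Om j)) v) = (\<lambda>x. z x + e x)"
      "t j * aform A c (Om j) e e \<le> aform A c (Om j) v v"
      using local_spectral_split[OF j eig[rule_format, OF j] t[OF j] v] by blast
    then have "splits j z e" unfolding splits_def by simp
    then show "\<exists>z e. splits j z e" by blast
  qed
  then obtain z where "\<forall>j\<in>{1..N}. \<exists>e. splits j (z j) e"
    by (auto dest: bchoice)
  then obtain e where "\<forall>j\<in>{1..N}. splits j (z j) (e j)"
    by (auto dest: bchoice)
  then show ?thesis
    using that[of z e] unfolding splits_def by auto
qed

lemma remainder_estimate:
  assumes e: "\<And>j. j \<in> {1..N} \<Longrightarrow> e j \<in> pw_poly"
      "\<And>j x. j \<in> {1..N} \<Longrightarrow> x \<notin> closure (Om j) \<Longrightarrow> e j x = 0"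
    and s: "0 \<le> s" "\<And>j. j \<in> {1..N} \<Longrightarrow> s * aform A c (Om j) (e j) (e j) \<le> aform A c (Om j) v v"
    and v: "v \<in> pw_poly"
  shows "s * aform A c \<Omega> (\<lambda>x. \<Sum>j\<in>{1..N}. e j x) (\<lambda>x. \<Sum>j\<in>{1..N}. e j x)
    \<le> (real (k0 T N Om))\<^sup>2 * aform A c \<Omega> v v"
proof -
  let ?K = "real (k0 T N Om)"
  have "s * aform A c \<Omega> (\<lambda>x. \<Sum>j\<in>{1..N}. e j x) (\<lambda>x. \<Sum>j\<in>{1..N}. e j x)
      \<le> s * (?K * (\<Sum>j\<in>{1..N}. aform A c (Om j) (e j) (e j)))"
    using aform_sum_le_k0[OF e] s(1) by (rule mult_left_mono)
  also have "\<dots> = ?K * (\<Sum>j\<in>{1..N}. s * aform A c (Om j) (e j) (e j))"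
    by (simp add: sum_distrib_left mult_ac)
  also have "\<dots> \<le> ?K * (\<Sum>j\<in>{1..N}. aform A c (Om j) v v)"
    using s(2) by (intro mult_left_mono sum_mono) auto
  also have "\<dots> \<le> ?K * (?K * aform A c \<Omega> v v)"
    using sum_aform_subdomains_le[OF v] by (intro mult_left_mono) auto
  finally show ?thesis
    by (simp add: power2_eq_square mult_ac)
qed

lemma coarse_space_estimate:
  fixes lam :: "nat \<Rightarrow> nat \<Rightarrow> ereal" and p :: "nat \<Rightarrow> nat \<Rightarrow> 'a \<Rightarrow> real" and m :: "nat \<Rightarrow> nat"
  assumes eig: "\<forall>j\<in>{1..N}. geneo_eigensystem (aform A c (Om j)) (Xi N Om X \<phi> j) (Vtilde Vh (Om j)) (lam j) (p j)"
    and t: "\<And>j. j \<in> {1..N} \<Longrightarrow> lam j (m j + 1) = ereal (t j)"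
    and s: "0 \<le> s" "\<And>j. j \<in> {1..N} \<Longrightarrow> s \<le> t j"
    and v: "v \<in> Vh"
  obtains Z where "Z \<in> fspan {RT (Om j) (Xi N Om X \<phi> j (p j l)) | j l. j \<in> {1..N} \<and> l \<in> {1..m j}}"
    "s * aform A c \<Omega> (v - Z) (v - Z) \<le> (real (k0 T N Om))\<^sup>2 * aform A c \<Omega> v v"
proof -
  let ?V0 = "fspan {RT (Om j) (Xi N Om X \<phi> j (p j l)) | j l. j \<in> {1..N} \<and> l \<in> {1..m j}}"
  obtain z e where z: "\<And>j. j \<in> {1..N} \<Longrightarrow> z j \<in> fspan ((\<lambda>l. Xi N Om X \<phi> j (p j l)) ` {1..m j})"
    and e: "\<And>j. j \<in> {1..N} \<Longrightarrow> e j \<in> pw_poly"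
      "\<And>j x. j \<in> {1..N} \<Longrightarrow> x \<notin> closure (Om j) \<Longrightarrow> e j x = 0"
    and split: "\<And>j. j \<in> {1..N} \<Longrightarrow> Xi N Om X \<phi> j (restr (closure (Om j)) v) = (\<lambda>x. z j x + e j x)"
    and local_bound: "\<And>j. j \<in> {1..N} \<Longrightarrow> t j * aform A c (Om j) (e j) (e j) \<le> aform A c (Om j) v v"
    using local_spectral_splits[OF eig t v] by blast
  define Z where "Z = (\<lambda>x. \<Sum>j\<in>{1..N}. z j x)"
  show ?thesis
  proof (rule that[of Z])
    have "fspan ((\<lambda>l. Xi N Om X \<phi> j (p j l)) ` {1..m j}) \<subseteq> ?V0" if "j \<in> {1..N}" for j
      using that by (intro fun_module.span_mono) (force simp: RT_Xi)
    then have "(\<Sum>j\<in>{1..N}. z j) \<in> ?V0"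
      using z by (intro fun_module.span_sum) blast
    then show "Z \<in> ?V0"
      unfolding Z_def by (simp add: sum_fun_apply[abs_def])
    have "v - Z = (\<lambda>x. \<Sum>j\<in>{1..N}. e j x)"
      using partition_of_unity[OF v] split unfolding Z_def
      by (simp add: fun_eq_iff sum.distrib)
    moreover have "s * aform A c (Om j) (e j) (e j) \<le> aform A c (Om j) v v" if j: "j \<in> {1..N}" for j
      using mult_right_mono[OF s(2)[OF j] aform_nonneg[OF subdomain(3,2)[OF j], of "e j"]] local_bound[OF j]
      by linarith
    ultimately show "s * aform A c \<Omega> (v - Z) (v - Z) \<le> (real (k0 T N Om))\<^sup>2 * aform A c \<Omega> v v"
      using remainder_estimate[OF e s(1)] Vh_subset_pw_poly v by auto
  qed
qed

lemma Inf_anorm_sq_le: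
  assumes "Z \<in> V" "0 < s" "s * aform A c \<Omega> (v - Z) (v - Z) \<le> K * aform A c \<Omega> v v"
  shows "Inf {(anorm A c \<Omega> (v - z))\<^sup>2 | z. z \<in> V} \<le> K * (1 / s) * (anorm A c \<Omega> v)\<^sup>2"
proof -
  have anorm_sq: "(anorm A c \<Omega> u)\<^sup>2 = aform A c \<Omega> u u" for u
    unfolding anorm_def using aform_nonneg[OF Omega_sets_lebesgue order_refl] by simp
  have "Inf {(anorm A c \<Omega> (v - z))\<^sup>2 | z. z \<in> V} \<le> (anorm A c \<Omega> (v - Z))\<^sup>2"
    using assms(1) by (intro cInf_lower bdd_belowI[of _ 0]) auto
  also have "\<dots> \<le> K * (1 / s) * (anorm A c \<Omega> v)\<^sup>2"
    using assms(2,3) unfolding anorm_sq by (simp add: field_simps)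
  finally show ?thesis .
qed

end

theorem lemma3p2:
  fixes \<Omega> :: "'a::euclidean_space set"
    and T :: "'a set set"
    and A :: "'a \<Rightarrow> 'a \<Rightarrow> 'a" and amax :: real
    and c :: "'a \<Rightarrow> real"
    and X :: "'a set" and \<phi> :: "'a \<Rightarrow> 'a \<Rightarrow> real" and Vh :: "('a \<Rightarrow> real) set"
    and N :: nat and T' :: "nat \<Rightarrow> 'a set set" and Om :: "nat \<Rightarrow> 'a set"
    and lam :: "nat \<Rightarrow> nat \<Rightarrow> ereal" and p :: "nat \<Rightarrow> nat \<Rightarrow> 'a \<Rightarrow> real"
    and m :: "nat \<Rightarrow> nat"
  assumes dom: "polyhedral_domain \<Omega> T"
    and A_lin: "\<forall>x\<in>\<Omega>. linear (A x)"
    and A_sym: "\<forall>x\<in>\<Omega>. \<forall>u w. A x u \<bullet> w = u \<bullet> A x w"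
    and A_ell: "\<forall>x\<in>\<Omega>. \<forall>\<xi>. (norm \<xi>)\<^sup>2 \<le> A x \<xi> \<bullet> \<xi> \<and> A x \<xi> \<bullet> \<xi> \<le> amax * (norm \<xi>)\<^sup>2"
    and A_meas: "\<forall>u w. (\<lambda>x. A x u \<bullet> w) \<in> borel_measurable lebesgue"
    and c_meas: "c \<in> borel_measurable lebesgue"
    and c_nonneg: "\<forall>x\<in>\<Omega>. 0 \<le> c x"
    and c_bdd: "\<exists>M. AE x in lebesgue_on \<Omega>. c x \<le> M"
    and fe: "nodal_fe_space T \<Omega> X \<phi> Vh"
    and N_pos: "1 \<le> N"
    and part: "\<forall>i\<in>{1..N}. T' i \<subseteq> T \<and> T' i \<noteq> {}"
    and part_disj: "\<forall>i\<in>{1..N}. \<forall>i'\<in>{1..N}. i \<noteq> i' \<longrightarrow> T' i \<inter> T' i' = {}"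
    and part_cover: "(\<Union>i\<in>{1..N}. T' i) = T"
    and overlap: "\<forall>i\<in>{1..N}. \<exists>L\<ge>1. Om i = interior (\<Union>((add_layer T ^^ L) (T' i)))"
    and eig: "\<forall>j\<in>{1..N}. geneo_eigensystem (aform A c (Om j)) (Xi N Om X \<phi> j)
                 (Vtilde Vh (Om j)) (lam j) (p j)"
    and m_range: "\<forall>j\<in>{1..N}. 1 \<le> m j \<and> m j \<le> fdim (Vloc Vh (Om j)) - 1"
    and lam_pos: "\<forall>j\<in>{1..N}. 0 < lam j (m j + 1) \<and> lam j (m j + 1) < \<infinity>"
  shows "\<forall>v\<in>Vh.
     (let V0 = fspan {RT (Om j) (Xi N Om X \<phi> j (p j l)) | j l. j \<in> {1..N} \<and> l \<in> {1..m j}};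
          \<Theta> = 1 / Min ((\<lambda>j. real_of_ereal (lam j (m j + 1))) ` {1..N})
      in Inf {(anorm A c \<Omega> (v - z))\<^sup>2 | z. z \<in> V0}
           \<le> (real (k0 T N Om))\<^sup>2 * \<Theta> * (anorm A c \<Omega> v)\<^sup>2)"
proof -
  interpret geneo_setting \<Omega> T A amax c X \<phi> Vh N T' Om
    using dom A_lin A_sym A_ell A_meas c_meas c_nonneg c_bdd fe part part_cover overlap
    by unfold_locales
  define V0 where "V0 = fspan {RT (Om j) (Xi N Om X \<phi> j (p j l)) | j l. j \<in> {1..N} \<and> l \<in> {1..m j}}"
  define t where "t = (\<lambda>j. real_of_ereal (lam j (m j + 1)))"
  define s where "s = Min (t ` {1..N})"
  have lam_t: "lam j (m j + 1) = ereal (t j) \<and> 0 < t j" if "j \<in> {1..N}" for j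
    using lam_pos[rule_format, OF that] unfolding t_def by (cases "lam j (m j + 1)") auto
  have s: "0 < s" "\<And>j. j \<in> {1..N} \<Longrightarrow> s \<le> t j"
    unfolding s_def using lam_t N_pos by auto
  have "Inf {(anorm A c \<Omega> (v - z))\<^sup>2 | z. z \<in> V0} \<le> (real (k0 T N Om))\<^sup>2 * (1 / s) * (anorm A c \<Omega> v)\<^sup>2"
    if v: "v \<in> Vh" for v
  proof -
    obtain Z where "Z \<in> V0" "s * aform A c \<Omega> (v - Z) (v - Z) \<le> (real (k0 T N Om))\<^sup>2 * aform A c \<Omega> v v"
      unfolding V0_def
      using coarse_space_estimate[OF eig conjunct1[OF lam_t] less_imp_le[OF s(1)] s(2) v] by blast
    then show ?thesis using Inf_anorm_sq_le s(1) by blast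
  qed
  then show ?thesis unfolding Let_def V0_def s_def t_def by blast
qed

end
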